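(* Let $\Lambda_f$ be a uniformly random numerical semigroup with Frobenius number $f$, and $m(\Lambda_f)$ its multiplicity. Then for every integer $k$: \[\lim_{f\to\infty,\ f \text{ even}} \mathbb{P}[f - 2m(\Lambda_f) = 2k] = \begin{cases} C_0^{-1} 2^{k-1} & k < 0,\\ 0 & k = 0,\\ C_0^{-1} 2^{-3k-1} S(2k) & k > 0;\end{cases}\] \[\lim_{f\to\infty,\ f \text{ odd}} \mathbb{P}[f - 2m(\Lambda_f) = 2k+1] = \begin{cases} C_1^{-1} 2^{(2k-1)/2} & k < 0,\\ C_1^{-1} 2^{-(6k+5)/2} S(2k+1) & k \geq 0.\end{cases}\]
   Context: A numerical semigroup is a subset $\Lambda \subseteq \mathbb{N}_0$ containing $0$, closed under addition, with finite complement; its multiplicity is $\min(\Lambda\setminus\{0\})$, its conductor is the least $c$ with $c + \mathbb{N}_0 \subseteq \Lambda$, and its Frobenius number is the conductor minus $1$. $\operatorname{Fr}(f)$ denotes the number of numerical semigroups with Frobenius number $f$, and $C_0 = \lim_{f\ \text{even}} 2^{-f/2}\operatorname{Fr}(f)$, $C_1 = \lim_{f\ \text{odd}} 2^{-f/2}\operatorname{Fr}(f)$ (these limits exist and are positive constants, by Backelin). For $j \geq 1$, $S(j)$ is the number of numerical semigroups with multiplicity $j+1$ and Frobenius number $3j+2$. *)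

theory Defs
  imports Complex_Main
begin

definition numerical_semigroup :: "nat set \<Rightarrow> bool" where
  "numerical_semigroup L \<longleftrightarrow> 0 \<in> L \<and> (\<forall>x\<in>L. \<forall>y\<in>L. x + y \<in> L) \<and> finite (- L)"

definition multiplicity :: "nat set \<Rightarrow> nat" where
  "multiplicity L = (LEAST x. x \<in> L \<and> 0 < x)"

definition conductor :: "nat set \<Rightarrow> nat" where
  "conductor L = (LEAST c. \<forall>n\<ge>c. n \<in> L)"

text \<open>Frobenius number = conductor - 1 (as an integer; it is -1 for the trivial semigroup).\<close>
definition frobenius :: "nat set \<Rightarrow> int" where
  "frobenius L = int (conductor L) - 1"

definition Fr :: "nat \<Rightarrow> nat" where
  "Fr f = card {L. numerical_semigroup L \<and> frobenius L = int f}"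

definition C0 :: real where
  "C0 = lim (\<lambda>n. real (Fr (2 * n)) / 2 powr (real (2 * n) / 2))"

definition C1 :: real where
  "C1 = lim (\<lambda>n. real (Fr (2 * n + 1)) / 2 powr (real (2 * n + 1) / 2))"

definition S :: "nat \<Rightarrow> nat" where
  "S j = card {L. numerical_semigroup L \<and> multiplicity L = j + 1 \<and> frobenius L = int (3 * j + 2)}"

definition prob_diff :: "nat \<Rightarrow> int \<Rightarrow> real" where
  "prob_diff f d = real (card {L. numerical_semigroup L \<and> frobenius L = int f
       \<and> int f - 2 * int (multiplicity L) = d}) / real (Fr f)"

end

theory Submission
  imports Defs "HOL-Library.FuncSet" "HOL-Real_Asymp.Real_Asymp"
begin

section \<open>Semigroups with prescribed Frobenius number\<close>

definition frob_semigroups :: "nat \<Rightarrow> nat set set" where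
  "frob_semigroups f = {L. 0 \<in> L \<and> (\<forall>x\<in>L. \<forall>y\<in>L. x + y \<in> L) \<and> f \<notin> L \<and> (\<forall>n>f. n \<in> L)}"

definition Fr_mult :: "nat \<Rightarrow> nat \<Rightarrow> nat" where
  "Fr_mult f m = card {L \<in> frob_semigroups f. multiplicity L = m}"

lemma conductor_eqI:
  assumes "f \<notin> L" "\<forall>n>f. n \<in> L"
  shows "conductor L = Suc f"
  unfolding conductor_def
proof (rule Least_equality)
  show "\<forall>n\<ge>Suc f. n \<in> L" using assms by auto
next
  fix c assume "\<forall>n\<ge>c. n \<in> L"
  then show "Suc f \<le> c" using assms(1) by (metis not_less_eq_eq)
qed

lemma frobenius_eq_iff:
  assumes "numerical_semigroup L"
  shows "frobenius L = int f \<longleftrightarrow> f \<notin> L \<and> (\<forall>n>f. n \<in> L)"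
proof
  assume "frobenius L = int f"
  then have c: "conductor L = Suc f" unfolding frobenius_def by simp
  have "finite (- L)" using assms unfolding numerical_semigroup_def by auto
  then obtain B where "\<forall>x\<in>-L. x < B" using finite_nat_set_iff_bounded by blast
  then have "\<forall>n\<ge>B. n \<in> L" by (meson ComplI leD)
  then have above: "\<forall>n\<ge>conductor L. n \<in> L"
    unfolding conductor_def by (rule LeastI)
  have "f \<notin> L"
  proof
    assume "f \<in> L"
    then have "\<forall>n\<ge>f. n \<in> L" using above c by (metis Suc_le_eq le_neq_implies_less)
    then have "conductor L \<le> f" unfolding conductor_def by (rule Least_le)
    then show False using c by simp
  qed
  then show "f \<notin> L \<and> (\<forall>n>f. n \<in> L)" using above c by auto
next
  assume "f \<notin> L \<and> (\<forall>n>f. n \<in> L)"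
  then show "frobenius L = int f" using conductor_eqI unfolding frobenius_def by auto
qed

lemma frob_semigroups_eq: "{L. numerical_semigroup L \<and> frobenius L = int f} = frob_semigroups f"
proof -
  have "numerical_semigroup L \<and> frobenius L = int f \<longleftrightarrow> L \<in> frob_semigroups f" for L
  proof
    assume "numerical_semigroup L \<and> frobenius L = int f"
    then show "L \<in> frob_semigroups f"
      using frobenius_eq_iff unfolding frob_semigroups_def numerical_semigroup_def by auto
  next
    assume L: "L \<in> frob_semigroups f"
    have "- L \<subseteq> {..f}" using L unfolding frob_semigroups_def by (auto simp: not_less[symmetric])
    then have "numerical_semigroup L"
      using L finite_subset unfolding frob_semigroups_def numerical_semigroup_def by auto
    then show "numerical_semigroup L \<and> frobenius L = int f"
      using frobenius_eq_iff L unfolding frob_semigroups_def by auto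
  qed
  then show ?thesis by auto
qed

lemma Fr_eq_card: "Fr f = card (frob_semigroups f)"
  unfolding Fr_def frob_semigroups_eq ..

lemma S_eq_Fr_mult: "S j = Fr_mult (3 * j + 2) (j + 1)"
proof -
  have "{L. numerical_semigroup L \<and> multiplicity L = j + 1 \<and> frobenius L = int (3 * j + 2)}
      = {L \<in> frob_semigroups (3 * j + 2). multiplicity L = j + 1}"
    using frob_semigroups_eq[of "3 * j + 2"] by blast
  then show ?thesis unfolding S_def Fr_mult_def by simp
qed

lemma finite_frob_semigroups: "finite (frob_semigroups f)"
proof (rule finite_surj)
  show "frob_semigroups f \<subseteq> (\<lambda>A. A \<union> {f<..}) ` Pow {..f}"
  proof
    fix L assume "L \<in> frob_semigroups f"
    then have "L = (L \<inter> {..f}) \<union> {f<..}" unfolding frob_semigroups_def by auto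
    then show "L \<in> (\<lambda>A. A \<union> {f<..}) ` Pow {..f}" by blast
  qed
qed simp

lemma multiplicity_eqI:
  assumes "m \<in> L" "0 < m" "\<And>x. 0 < x \<Longrightarrow> x < m \<Longrightarrow> x \<notin> L"
  shows "multiplicity L = m"
  unfolding multiplicity_def
  by (rule Least_equality) (use assms in \<open>auto simp: not_less[symmetric]\<close>)

locale frob_semigroup =
  fixes L :: "nat set" and f :: nat
  assumes frob_semigroup: "L \<in> frob_semigroups f"
begin

lemma zero_mem: "0 \<in> L"
  and add_mem: "x \<in> L \<Longrightarrow> y \<in> L \<Longrightarrow> x + y \<in> L"
  and frob_not_mem: "f \<notin> L"
  and mem_above: "f < n \<Longrightarrow> n \<in> L"
  using frob_semigroup unfolding frob_semigroups_def by auto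

lemma mult_mem: "x \<in> L \<Longrightarrow> k * x \<in> L"
  by (induction k) (simp_all add: zero_mem add_mem)

lemma add_mult_mem: "x \<in> L \<Longrightarrow> y \<in> L \<Longrightarrow> x + k * y \<in> L"
  by (simp add: add_mem mult_mem)

lemma multiplicity_mem: "multiplicity L \<in> L"
  and multiplicity_pos: "0 < multiplicity L"
  and multiplicity_le: "multiplicity L \<le> Suc f"
  and not_mem_below_multiplicity: "0 < x \<Longrightarrow> x < multiplicity L \<Longrightarrow> x \<notin> L"
proof -
  have "Suc f \<in> L \<and> 0 < Suc f" using mem_above by simp
  then have "multiplicity L \<in> L \<and> 0 < multiplicity L"
    unfolding multiplicity_def by (rule LeastI)
  then show "multiplicity L \<in> L" "0 < multiplicity L" by auto
  show "multiplicity L \<le> Suc f"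
    unfolding multiplicity_def using \<open>Suc f \<in> L \<and> 0 < Suc f\<close> by (rule Least_le)
  show "0 < x \<Longrightarrow> x < multiplicity L \<Longrightarrow> x \<notin> L"
    unfolding multiplicity_def using not_less_Least by blast
qed

lemma multiplicity_not_dvd_frob: "\<not> multiplicity L dvd f"
  using mult_mem[OF multiplicity_mem] frob_not_mem by (metis dvd_def mult.commute)

lemma two_le_multiplicity: "2 \<le> multiplicity L"
proof -
  have "multiplicity L \<noteq> 1" using multiplicity_not_dvd_frob by auto
  then show ?thesis using multiplicity_pos by linarith
qed

end

lemma Fr_mult_eq_0_if_dvd:
  assumes "m dvd f"
  shows "Fr_mult f m = 0"
proof -
  have "{L \<in> frob_semigroups f. multiplicity L = m} = {}"
    using frob_semigroup.multiplicity_not_dvd_frob assms unfolding frob_semigroup_def by blast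
  then show ?thesis unfolding Fr_mult_def by (simp only: card.empty)
qed

lemma S_0: "S 0 = 0"
  unfolding S_eq_Fr_mult by (simp add: Fr_mult_eq_0_if_dvd)

lemma sum_Fr_mult:
  assumes "finite A"
  shows "(\<Sum>m\<in>A. Fr_mult f m) = card {L \<in> frob_semigroups f. multiplicity L \<in> A}"
proof -
  have "{L \<in> frob_semigroups f. multiplicity L \<in> A} = (\<Union>m\<in>A. {L \<in> frob_semigroups f. multiplicity L = m})"
    by auto
  moreover have "card (\<Union>m\<in>A. {L \<in> frob_semigroups f. multiplicity L = m})
      = (\<Sum>m\<in>A. card {L \<in> frob_semigroups f. multiplicity L = m})"
    by (rule card_UN_disjoint) (use assms finite_frob_semigroups in auto)
  ultimately show ?thesis unfolding Fr_mult_def by simp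
qed

lemma Fr_eq_sum_Fr_mult: "Fr f = (\<Sum>m\<in>{1..Suc f}. Fr_mult f m)"
proof -
  have "(\<Sum>m\<in>{1..Suc f}. Fr_mult f m) = card {L \<in> frob_semigroups f. multiplicity L \<in> {1..Suc f}}"
    by (rule sum_Fr_mult) simp
  also have "{L \<in> frob_semigroups f. multiplicity L \<in> {1..Suc f}} = frob_semigroups f"
    using frob_semigroup.multiplicity_pos frob_semigroup.multiplicity_le
    unfolding frob_semigroup_def by (auto simp: Suc_le_eq)
  finally show ?thesis unfolding Fr_eq_card ..
qed

section \<open>Exact counts for large multiplicity\<close>

text \<open>If \<open>f \<le> 2 k + 1\<close>, the sum of two nonzero elements exceeding \<open>k\<close> exceeds \<open>f\<close>, so every
  subset of \<open>(k, f)\<close> extends to exactly one semigroup with no nonzero element \<open>\<le> k\<close>.\<close>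

lemma card_multiplicity_gt:
  assumes "f \<le> 2 * k + 1" "k < f"
  shows "card {L \<in> frob_semigroups f. k < multiplicity L} = 2 ^ (f - 1 - k)"
proof -
  let ?X = "{L \<in> frob_semigroups f. k < multiplicity L}"
  let ?build = "\<lambda>A. {0} \<union> A \<union> {f<..}"
  have build_mem: "?build A \<in> ?X" if A: "A \<subseteq> {k<..<f}" for A
  proof -
    have "x + y \<in> ?build A" if "x \<in> ?build A" "y \<in> ?build A" for x y
    proof (cases "x = 0 \<or> y = 0")
      case False
      then have "k < x" "k < y" using that A assms by auto
      then show ?thesis using assms by auto
    qed (use that in auto)
    then have L: "?build A \<in> frob_semigroups f" unfolding frob_semigroups_def using A assms by auto
    then interpret frob_semigroup "?build A" f by unfold_locales
    have "k < multiplicity (?build A)" using multiplicity_mem multiplicity_pos A assms by auto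
    with L show ?thesis by simp
  qed
  have build_restrict: "?build (L \<inter> {k<..<f}) = L" if L: "L \<in> ?X" for L
  proof -
    interpret frob_semigroup L f using L by unfold_locales simp
    have "x \<in> ?build (L \<inter> {k<..<f}) \<longleftrightarrow> x \<in> L" for x
    proof -
      consider "x = 0" | "0 < x" "x \<le> k" | "k < x" "x < f" | "x = f" | "f < x" by linarith
      then show ?thesis
        using zero_mem not_mem_below_multiplicity[of x] frob_not_mem mem_above L assms by cases auto
    qed
    then show ?thesis by blast
  qed
  have "bij_betw (\<lambda>L. L \<inter> {k<..<f}) ?X (Pow {k<..<f})"
    by (rule bij_betw_byWitness[where f' = ?build]) (use build_mem build_restrict in auto)
  then have "card ?X = card (Pow {k<..<f})" by (rule bij_betw_same_card)
  then show ?thesis by (simp add: card_Pow)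
qed

lemma Fr_mult_above_half:
  assumes "f < 2 * m" "m < f"
  shows "Fr_mult f m = 2 ^ (f - 1 - m)"
proof -
  let ?X = "\<lambda>k. {L \<in> frob_semigroups f. k < multiplicity L}"
  have "{L \<in> frob_semigroups f. multiplicity L = m} = ?X (m - 1) - ?X m" using assms by auto
  moreover have "?X m \<subseteq> ?X (m - 1)" "finite (?X m)" using finite_frob_semigroups by auto
  ultimately have "Fr_mult f m = card (?X (m - 1)) - card (?X m)"
    unfolding Fr_mult_def by (simp add: card_Diff_subset)
  also have "\<dots> = 2 ^ Suc (f - 1 - m) - 2 ^ (f - 1 - m)"
    using card_multiplicity_gt[of f "m - 1"] card_multiplicity_gt[of f m] assms
    by (simp add: Suc_diff_Suc)
  finally show ?thesis by simp
qed

text \<open>For \<open>f = 2 m + d\<close> with \<open>0 < d < m\<close>, a semigroup of multiplicity \<open>m\<close> is determined by the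
  sets \<open>I\<close>, \<open>J\<close> of \<open>i < d\<close> with \<open>m + i\<close> resp.\ \<open>2 m + i\<close> in it, which form an admissible pair
  independent of \<open>m\<close>, and by its elements in \<open>(m + d, 2 m)\<close>, which are unconstrained.\<close>

definition admissible_pairs :: "nat \<Rightarrow> (nat set \<times> nat set) set" where
  "admissible_pairs d = {(I, J). I \<subseteq> {1..<d} \<and> J \<subseteq> {1..<d} \<and> I \<subseteq> J \<and>
     (\<forall>i\<in>I. \<forall>i'\<in>I. i + i' \<noteq> d \<and> (i + i' < d \<longrightarrow> i + i' \<in> J))}"

definition middle_semigroup :: "nat \<Rightarrow> nat \<Rightarrow> (nat set \<times> nat set) \<times> nat set \<Rightarrow> nat set" where
  "middle_semigroup m d = (\<lambda>((I, J), F).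
     {0, m, 2 * m} \<union> (+) m ` I \<union> (+) (2 * m) ` J \<union> (+) m ` F \<union> {2 * m + d<..})"

definition middle_pattern :: "nat \<Rightarrow> nat \<Rightarrow> nat set \<Rightarrow> (nat set \<times> nat set) \<times> nat set" where
  "middle_pattern m d L =
     (({i \<in> {1..<d}. m + i \<in> L}, {i \<in> {1..<d}. 2 * m + i \<in> L}), {i \<in> {d<..<m}. m + i \<in> L})"

lemma nat_mem_image_plus_iff: "x \<in> (+) c ` A \<longleftrightarrow> c \<le> x \<and> x - c \<in> (A :: nat set)"
  by (auto intro: image_eqI[where x = "x - c"])

lemma finite_admissible_pairs: "finite (admissible_pairs d)"
  by (rule finite_subset[of _ "Pow {1..<d} \<times> Pow {1..<d}"]) (auto simp: admissible_pairs_def)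

lemma middle_pattern_middle_semigroup:
  assumes "x \<in> admissible_pairs d \<times> Pow {d<..<m}" "d < m"
  shows "middle_pattern m d (middle_semigroup m d x) = x"
proof -
  obtain I J F where x_eq: "x = ((I, J), F)" by (metis prod.collapse)
  have "I \<subseteq> {1..<d}" "J \<subseteq> {1..<d}" "F \<subseteq> {d<..<m}"
    using assms(1) unfolding x_eq admissible_pairs_def by auto
  then show ?thesis
    using assms(2) unfolding x_eq middle_pattern_def middle_semigroup_def
    by (auto simp: nat_mem_image_plus_iff)
qed
lemma admissible_pair_add:
  assumes "(I, J) \<in> admissible_pairs d" "a = 0 \<or> a \<in> I" "b = 0 \<or> b \<in> I" "a + b \<le> d"
  shows "a + b = 0 \<or> a + b \<in> J"
proof (cases "a = 0 \<or> b = 0")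
  case True
  then show ?thesis using assms unfolding admissible_pairs_def by auto
next
  case False
  then have "a \<in> I" "b \<in> I" using assms(2,3) by auto
  with assms(1) have "a + b \<noteq> d" "a + b < d \<longrightarrow> a + b \<in> J" unfolding admissible_pairs_def by auto
  then show ?thesis using assms(4) by auto
qed

lemma middle_semigroup_closed:
  assumes x: "x \<in> admissible_pairs d \<times> Pow {d<..<m}" and dm: "d < m"
    and y: "y \<in> middle_semigroup m d x" and z: "z \<in> middle_semigroup m d x"
  shows "y + z \<in> middle_semigroup m d x"
proof -
  obtain I J F where x_eq: "x = ((I, J), F)" by (metis prod.collapse)
  have IJ: "(I, J) \<in> admissible_pairs d" and F: "F \<subseteq> {d<..<m}" using x unfolding x_eq by auto
  let ?A = "middle_semigroup m d x"
  have A_eq: "?A = {0, m, 2 * m} \<union> (+) m ` I \<union> (+) (2 * m) ` J \<union> (+) m ` F \<union> {2 * m + d<..}"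
    unfolding x_eq middle_semigroup_def by simp
  have top: "2 * m + c \<in> ?A" if "c = 0 \<or> c \<in> J \<or> d < c" for c
    using that unfolding A_eq by auto
  have shape: "u = 0 \<or> 2 * m \<le> u \<or> (\<exists>a. u = m + a \<and> (a = 0 \<or> a \<in> I \<or> a \<in> F))" if "u \<in> ?A" for u
    using that unfolding A_eq by auto
  consider "y = 0" | "z = 0" | "m \<le> y" "m \<le> z" "2 * m \<le> y \<or> 2 * m \<le> z"
    | a b where "y = m + a" "z = m + b" "a = 0 \<or> a \<in> I \<or> a \<in> F" "b = 0 \<or> b \<in> I \<or> b \<in> F"
    using shape[OF y] shape[OF z] by fastforce
  then show ?thesis
  proof cases
    case 3
    then have "y + z = 2 * m + (y + z - 2 * m)" "d < y + z - 2 * m" using dm by auto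
    then show ?thesis using top by metis
  next
    case (4 a b)
    have "a + b = 0 \<or> a + b \<in> J \<or> d < a + b"
    proof (cases "a \<in> F \<or> b \<in> F \<or> d < a + b")
      case False
      then show ?thesis using admissible_pair_add[OF IJ, of a b] 4 by auto
    qed (use F in auto)
    then show ?thesis using top[of "a + b"] 4 by (simp add: mult_2 add_ac)
  qed (use y z in auto)
qed

lemma middle_semigroup_mem:
  assumes x: "x \<in> admissible_pairs d \<times> Pow {d<..<m}" and d: "0 < d" "d < m"
  shows "middle_semigroup m d x \<in> {L \<in> frob_semigroups (2 * m + d). multiplicity L = m}"
proof -
  obtain I J F where x_eq: "x = ((I, J), F)" by (metis prod.collapse)
  have IJF: "I \<subseteq> {1..<d}" "J \<subseteq> {1..<d}" "F \<subseteq> {d<..<m}"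
    using x unfolding x_eq admissible_pairs_def by auto
  let ?A = "middle_semigroup m d x"
  have A_eq: "?A = {0, m, 2 * m} \<union> (+) m ` I \<union> (+) (2 * m) ` J \<union> (+) m ` F \<union> {2 * m + d<..}"
    unfolding x_eq middle_semigroup_def by simp
  have "?A \<in> frob_semigroups (2 * m + d)"
    unfolding frob_semigroups_def
  proof (intro CollectI conjI ballI allI impI)
    show "0 \<in> ?A" unfolding A_eq by simp
    show "y + z \<in> ?A" if "y \<in> ?A" "z \<in> ?A" for y z
      using middle_semigroup_closed[OF x d(2) that] .
    show "2 * m + d \<notin> ?A" using IJF d unfolding A_eq by (auto simp: nat_mem_image_plus_iff)
    show "n \<in> ?A" if "2 * m + d < n" for n using that unfolding A_eq by simp
  qed
  moreover have "multiplicity ?A = m"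
    by (rule multiplicity_eqI) (use d in \<open>auto simp: A_eq nat_mem_image_plus_iff\<close>)
  ultimately show ?thesis by simp
qed

lemma (in frob_semigroup) middle_pattern_admissible:
  assumes f: "f = 2 * m + d" and mult: "multiplicity L = m"
  shows "middle_pattern m d L \<in> admissible_pairs d \<times> Pow {d<..<m}"
proof -
  let ?I = "{i \<in> {1..<d}. m + i \<in> L}" and ?J = "{i \<in> {1..<d}. 2 * m + i \<in> L}"
  have m: "m \<in> L" using multiplicity_mem mult by simp
  have sum_mem: "2 * m + (i + i') \<in> L" if "i \<in> ?I" "i' \<in> ?I" for i i'
    using add_mem[of "m + i" "m + i'"] that by (simp add: mult_2 add_ac)
  have "?I \<subseteq> ?J"
  proof
    fix i assume i: "i \<in> ?I"
    then have "m + (m + i) \<in> L" using add_mem[OF m] by blast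
    then show "i \<in> ?J" using i by (simp add: mult_2 add.assoc)
  qed
  moreover have "i + i' \<noteq> d" if "i \<in> ?I" "i' \<in> ?I" for i i'
    using sum_mem[OF that] frob_not_mem f by auto
  moreover have "i + i' \<in> ?J" if "i \<in> ?I" "i' \<in> ?I" "i + i' < d" for i i'
    using sum_mem[OF that(1,2)] that by auto
  ultimately have "(?I, ?J) \<in> admissible_pairs d" unfolding admissible_pairs_def by blast
  then show ?thesis unfolding middle_pattern_def by auto
qed

lemma (in frob_semigroup) middle_semigroup_middle_pattern:
  assumes f: "f = 2 * m + d" and mult: "multiplicity L = m" and d: "0 < d" "d < m"
  shows "middle_semigroup m d (middle_pattern m d L) = L"
proof
  have m: "m \<in> L" using multiplicity_mem mult by simp
  have "2 * m \<in> L" using add_mem[OF m m] by (simp add: mult_2)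
  then show "middle_semigroup m d (middle_pattern m d L) \<subseteq> L"
    using zero_mem m mem_above f unfolding middle_semigroup_def middle_pattern_def by auto
  show "L \<subseteq> middle_semigroup m d (middle_pattern m d L)"
  proof
    fix x assume x: "x \<in> L"
    have "x \<noteq> m + d" using add_mem[OF m, of "m + d"] frob_not_mem f x by (auto simp: mult_2 add_ac)
    moreover have "\<not> (0 < x \<and> x < m)" using not_mem_below_multiplicity mult x by auto
    moreover have "x \<noteq> f" using frob_not_mem x by auto
    ultimately consider "x = 0" | "x = m" | "m < x" "x < m + d" | "m + d < x" "x < 2 * m"
      | "x = 2 * m" | "2 * m < x" "x < f" | "f < x"
      using f by linarith
    then show "x \<in> middle_semigroup m d (middle_pattern m d L)"
      unfolding middle_semigroup_def middle_pattern_def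
      by cases (use x f d in \<open>auto simp: nat_mem_image_plus_iff\<close>)
  qed
qed

lemma Fr_mult_middle_eq_card:
  assumes d: "0 < d" "d < m"
  shows "Fr_mult (2 * m + d) m = card (admissible_pairs d) * 2 ^ (m - 1 - d)"
proof -
  let ?X = "{L \<in> frob_semigroups (2 * m + d). multiplicity L = m}"
  let ?P = "admissible_pairs d \<times> Pow {d<..<m}"
  have "bij_betw (middle_semigroup m d) ?P ?X"
  proof (rule bij_betw_byWitness[where f' = "middle_pattern m d"])
    show "\<forall>x\<in>?P. middle_pattern m d (middle_semigroup m d x) = x"
      using middle_pattern_middle_semigroup d(2) by blast
    show "\<forall>L\<in>?X. middle_semigroup m d (middle_pattern m d L) = L"
    proof
      fix L assume "L \<in> ?X"
      then interpret frob_semigroup L "2 * m + d" by unfold_locales simp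
      show "middle_semigroup m d (middle_pattern m d L) = L"
        using middle_semigroup_middle_pattern \<open>L \<in> ?X\<close> d by simp
    qed
    show "middle_semigroup m d ` ?P \<subseteq> ?X"
      using middle_semigroup_mem[OF _ d] by blast
    show "middle_pattern m d ` ?X \<subseteq> ?P"
    proof
      fix x assume "x \<in> middle_pattern m d ` ?X"
      then obtain L where L: "L \<in> ?X" and x: "x = middle_pattern m d L" by blast
      interpret frob_semigroup L "2 * m + d" using L by unfold_locales simp
      show "x \<in> ?P" using middle_pattern_admissible L unfolding x by simp
    qed
  qed
  then have "card ?X = card ?P" by (rule bij_betw_same_card[symmetric])
  then show ?thesis
    unfolding Fr_mult_def by (simp add: card_cartesian_product card_Pow finite_admissible_pairs)
qed

lemma Fr_mult_middle:
  assumes "d < m"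
  shows "Fr_mult (2 * m + d) m = S d * 2 ^ (m - 1 - d)"
proof (cases "d = 0")
  case True
  then show ?thesis by (simp add: Fr_mult_eq_0_if_dvd S_0)
next
  case False
  then have "S d = card (admissible_pairs d)"
    using Fr_mult_middle_eq_card[of d "d + 1"] unfolding S_eq_Fr_mult by (simp add: algebra_simps)
  then show ?thesis using Fr_mult_middle_eq_card[of d m] assms False by simp
qed

section \<open>Kunz coordinates\<close>

definition apery :: "nat set \<Rightarrow> nat \<Rightarrow> nat \<Rightarrow> nat" where
  "apery L m r = (LEAST x. x \<in> L \<and> x mod m = r)"

definition kunz :: "nat set \<Rightarrow> nat \<Rightarrow> nat \<Rightarrow> nat" where
  "kunz L m r = apery L m r div m"

locale frob_semigroup_mult = frob_semigroup +
  fixes m :: nat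
  assumes multiplicity_eq: "multiplicity L = m"
begin

lemma mult_in: "m \<in> L"
  and two_le_mult: "2 \<le> m"
  and not_mem_below_mult: "0 < x \<Longrightarrow> x < m \<Longrightarrow> x \<notin> L"
  and frob_mod_pos: "0 < f mod m"
  using multiplicity_mem two_le_multiplicity not_mem_below_multiplicity multiplicity_not_dvd_frob
  by (auto simp: multiplicity_eq dvd_eq_mod_eq_0)

lemma apery_mem: "r < m \<Longrightarrow> apery L m r \<in> L"
  and apery_mod: "r < m \<Longrightarrow> apery L m r mod m = r"
proof -
  assume r: "r < m"
  have "Suc f \<le> Suc f * m" using mult_le_mono2[of 1 m "Suc f"] two_le_mult by simp
  then have "f < Suc f * m + r" by linarith
  moreover have "(Suc f * m + r) mod m = r" by (simp only: mod_mult_self3) (simp add: r)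
  ultimately have "Suc f * m + r \<in> L \<and> (Suc f * m + r) mod m = r" using mem_above by blast
  then have "apery L m r \<in> L \<and> apery L m r mod m = r" unfolding apery_def by (rule LeastI)
  then show "apery L m r \<in> L" "apery L m r mod m = r" by auto
qed

lemma apery_le: "x \<in> L \<Longrightarrow> apery L m (x mod m) \<le> x"
  unfolding apery_def by (rule Least_le) simp

lemma mem_iff_apery_le: "x \<in> L \<longleftrightarrow> apery L m (x mod m) \<le> x"
proof
  assume le: "apery L m (x mod m) \<le> x"
  have a: "apery L m (x mod m) \<in> L" "apery L m (x mod m) mod m = x mod m"
    using apery_mem apery_mod two_le_mult by auto
  then have "m dvd x - apery L m (x mod m)" by (simp add: mod_eq_dvd_iff_nat[OF le, symmetric])
  then obtain j where "x - apery L m (x mod m) = m * j" by (rule dvdE)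
  then have "x = apery L m (x mod m) + j * m" using le by (metis le_add_diff_inverse mult.commute)
  then show "x \<in> L" using add_mult_mem[OF a(1) mult_in] by metis
qed (rule apery_le)

lemma apery_0: "apery L m 0 = 0"
  using apery_le[OF zero_mem] by simp

lemma apery_eq: "r < m \<Longrightarrow> apery L m r = r + m * kunz L m r"
  using div_mult_mod_eq[of "apery L m r" m] apery_mod unfolding kunz_def by (simp add: mult.commute)

lemma kunz_pos:
  assumes "0 < r" "r < m"
  shows "0 < kunz L m r"
proof (rule ccontr)
  assume "\<not> 0 < kunz L m r"
  then have "apery L m r = r" using apery_eq[OF assms(2)] by simp
  then show False using apery_mem[OF assms(2)] not_mem_below_mult[OF assms] by simp
qed

lemma kunz_le_frob:
  assumes "0 < r" "r < m"
  shows "r + m * (kunz L m r - 1) \<le> f"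
proof (rule ccontr)
  obtain k where k: "kunz L m r = Suc k" using kunz_pos[OF assms] gr0_implies_Suc by blast
  assume "\<not> ?thesis"
  then have "r + m * k \<in> L" using k by (simp add: mem_above)
  moreover have "(r + m * k) mod m = r" using assms(2) by simp
  ultimately have "apery L m r \<le> r + m * k" using apery_le by metis
  then show False using apery_eq[OF assms(2)] k two_le_mult by simp
qed

lemma kunz_le:
  assumes "0 < r" "r < m"
  shows "kunz L m r \<le> f div m + 1"
proof -
  have "(kunz L m r - 1) * m \<le> f" using kunz_le_frob[OF assms] by (metis add_leD2 mult.commute)
  then have "kunz L m r - 1 \<le> f div m" using two_le_mult by (simp add: less_eq_div_iff_mult_less_eq)
  then show ?thesis by linarith
qed

lemma kunz_le_above:
  assumes "f mod m < r" "r < m"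
  shows "kunz L m r \<le> f div m"
proof -
  have "m * (kunz L m r - 1) < m * (f div m)"
    using kunz_le_frob[of r] assms frob_mod_pos mult_div_mod_eq[of m f] by linarith
  then have "kunz L m r - 1 < f div m" by simp
  then show ?thesis by linarith
qed

lemma apery_add_mod:
  assumes "r < m" "r' < m"
  shows "(apery L m r + apery L m r') mod m = (r + r') mod m"
  using mod_add_eq[of "apery L m r" m "apery L m r'"] apery_mod assms by simp

lemma kunz_subadditive:
  assumes "0 < r" "0 < r'" "r + r' < m"
  shows "kunz L m (r + r') \<le> kunz L m r + kunz L m r'"
proof -
  have rm: "r < m" "r' < m" using assms by auto
  have "apery L m r + apery L m r' \<in> L" using add_mem apery_mem rm by simp
  then have "apery L m (r + r') \<le> apery L m r + apery L m r'"
    using apery_le apery_add_mod[OF rm] assms(3) by fastforce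
  then have "m * kunz L m (r + r') \<le> m * (kunz L m r + kunz L m r')"
    using apery_eq assms(3) rm by (simp add: distrib_left)
  then show ?thesis using two_le_mult by simp
qed

lemma frob_lt_apery_add:
  assumes "r < m" "r' < m" "(r + r') mod m = f mod m"
  shows "f < apery L m r + apery L m r'"
proof (rule ccontr)
  have "apery L m r + apery L m r' \<in> L" using add_mem apery_mem assms by simp
  then have "apery L m (f mod m) \<le> apery L m r + apery L m r'"
    using apery_le apery_add_mod[OF assms(1,2)] assms(3) by fastforce
  moreover assume "\<not> f < apery L m r + apery L m r'"
  ultimately show False using mem_iff_apery_le frob_not_mem by simp
qed

lemma kunz_add_low:
  assumes "0 < r" "0 < r'" "r + r' = f mod m"
  shows "f div m + 1 \<le> kunz L m r + kunz L m r'"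
proof -
  have rm: "r < m" "r' < m" using assms mod_less_divisor[of m f] two_le_mult by linarith+
  have "m * (f div m) + f mod m < f mod m + m * (kunz L m r + kunz L m r')"
    using frob_lt_apery_add[OF rm] apery_eq[OF rm(1)] apery_eq[OF rm(2)] assms
    by (simp add: distrib_left)
  then show ?thesis by (simp only: add.commute[of "f mod m"] add_less_cancel_right mult_less_cancel1) simp
qed

lemma kunz_add_high:
  assumes "r < m" "r' < m" "r + r' = m + f mod m"
  shows "f div m \<le> kunz L m r + kunz L m r'"
proof -
  have "f < apery L m r + apery L m r'" using frob_lt_apery_add[OF assms(1,2)] assms(3) by simp
  then have "m * (f div m) < m * kunz L m r + m * kunz L m r' + m"
    using apery_eq[OF assms(1)] apery_eq[OF assms(2)] assms(3) mult_div_mod_eq[of m f] by linarith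
  then have "m * (f div m) < m * (kunz L m r + kunz L m r' + 1)" by (simp add: distrib_left)
  then have "f div m < kunz L m r + kunz L m r' + 1" using mult_less_cancel1 by blast
  then show ?thesis by simp
qed

end

lemma frob_semigroup_eq_if_kunz_eq:
  assumes "frob_semigroup_mult L f m" "frob_semigroup_mult L' f' m"
    and "\<And>r. 0 < r \<Longrightarrow> r < m \<Longrightarrow> kunz L m r = kunz L' m r"
  shows "L = L'"
proof -
  interpret L: frob_semigroup_mult L f m by fact
  interpret L': frob_semigroup_mult L' f' m by fact
  have "apery L m r = apery L' m r" if "r < m" for r
    using L.apery_0 L'.apery_0 L.apery_eq[OF that] L'.apery_eq[OF that] assms(3)[of r] that
    by (cases "r = 0") simp_all
  then show ?thesis using L.mem_iff_apery_le L'.mem_iff_apery_le L.two_le_mult by auto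
qed

text \<open>Constraints satisfied by the Kunz coordinates on \<open>{1..<m}\<close> of every semigroup with
  Frobenius number \<open>f\<close> and multiplicity \<open>m\<close>.\<close>

definition kunz_vectors :: "nat \<Rightarrow> nat \<Rightarrow> (nat \<Rightarrow> nat) set" where
  "kunz_vectors f m = {v \<in> extensional {1..<m}.
     (\<forall>r\<in>{1..<m}. 1 \<le> v r \<and> v r \<le> f div m + 1) \<and>
     (\<forall>r\<in>{f mod m<..<m}. v r \<le> f div m) \<and>
     (\<forall>r r'. 0 < r \<longrightarrow> 0 < r' \<longrightarrow> r + r' < m \<longrightarrow> v (r + r') \<le> v r + v r') \<and>
     (\<forall>r r'. 0 < r \<longrightarrow> 0 < r' \<longrightarrow> r + r' = f mod m \<longrightarrow> f div m + 1 \<le> v r + v r') \<and>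
     (\<forall>r r'. r < m \<longrightarrow> r' < m \<longrightarrow> r + r' = m + f mod m \<longrightarrow> f div m \<le> v r + v r')}"

lemma finite_kunz_vectors: "finite (kunz_vectors f m)"
proof (rule finite_subset)
  show "kunz_vectors f m \<subseteq> PiE {1..<m} (\<lambda>_. {..f div m + 1})"
    unfolding kunz_vectors_def by (auto simp: PiE_def Pi_def)
qed (simp add: finite_PiE)

lemma (in frob_semigroup_mult) restrict_kunz_mem_kunz_vectors:
  "restrict (kunz L m) {1..<m} \<in> kunz_vectors f m"
proof -
  let ?v = "restrict (kunz L m) {1..<m}"
  have s: "f mod m < m" using two_le_mult by simp
  show ?thesis unfolding kunz_vectors_def
  proof (intro CollectI conjI ballI allI impI)
    fix r assume "r \<in> {1..<m}"
    then show "1 \<le> ?v r" "?v r \<le> f div m + 1" using kunz_pos kunz_le by (auto simp: Suc_le_eq)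
  next
    fix r assume "r \<in> {f mod m<..<m}"
    then show "?v r \<le> f div m" using kunz_le_above frob_mod_pos by auto
  next
    fix r r' :: nat assume "0 < r" "0 < r'" "r + r' < m"
    then show "?v (r + r') \<le> ?v r + ?v r'" using kunz_subadditive by simp
  next
    fix r r' :: nat assume "0 < r" "0 < r'" "r + r' = f mod m"
    then show "f div m + 1 \<le> ?v r + ?v r'" using kunz_add_low s by simp
  next
    fix r r' assume "r < m" "r' < m" "r + r' = m + f mod m"
    moreover from this have "0 < r" "0 < r'" by auto
    ultimately show "f div m \<le> ?v r + ?v r'" using kunz_add_high by simp
  qed simp
qed

lemma Fr_mult_le_card_kunz_vectors: "Fr_mult f m \<le> card (kunz_vectors f m)"
proof -
  let ?X = "{L \<in> frob_semigroups f. multiplicity L = m}"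
  have fsm: "frob_semigroup_mult L f m" if "L \<in> ?X" for L
    using that by unfold_locales auto
  have "inj_on (\<lambda>L. restrict (kunz L m) {1..<m}) ?X"
  proof (rule inj_onI)
    fix L L' assume L: "L \<in> ?X" "L' \<in> ?X" and eq: "restrict (kunz L m) {1..<m} = restrict (kunz L' m) {1..<m}"
    have "kunz L m r = kunz L' m r" if "0 < r" "r < m" for r
      using fun_cong[OF eq, of r] that by simp
    then show "L = L'" using frob_semigroup_eq_if_kunz_eq[OF fsm[OF L(1)] fsm[OF L(2)]] by blast
  qed
  moreover have "(\<lambda>L. restrict (kunz L m) {1..<m}) ` ?X \<subseteq> kunz_vectors f m"
    using frob_semigroup_mult.restrict_kunz_mem_kunz_vectors fsm by blast
  ultimately show ?thesis unfolding Fr_mult_def by (intro card_inj_on_le finite_kunz_vectors)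
qed

section \<open>Counting functions through their restrictions\<close>

lemma card_le_prod_card_restrict:
  fixes W :: "('a \<Rightarrow> 'b) set" and B :: "'c \<Rightarrow> 'a set"
  assumes W: "W \<subseteq> extensional U" and R: "finite R" and cover: "U \<subseteq> (\<Union>p\<in>R. B p)"
  shows "card W \<le> (\<Prod>p\<in>R. card ((\<lambda>w. restrict w (B p)) ` W))"
proof (cases "finite W")
  case True
  let ?\<Phi> = "\<lambda>w. \<lambda>p\<in>R. restrict w (B p)"
  have "inj_on ?\<Phi> W"
  proof (rule inj_onI)
    fix w w' assume ww: "w \<in> W" "w' \<in> W" "?\<Phi> w = ?\<Phi> w'"
    show "w = w'"
    proof (rule extensionalityI[of _ U])
      fix x assume "x \<in> U"
      then obtain p where "p \<in> R" "x \<in> B p" using cover by blast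
      then show "w x = w' x" using fun_cong[OF ww(3), of p] by (metis restrict_apply')
    qed (use ww W in auto)
  qed
  then have "card W = card (?\<Phi> ` W)" by (simp add: card_image)
  also have "\<dots> \<le> card (PiE R (\<lambda>p. (\<lambda>w. restrict w (B p)) ` W))"
    using R True by (intro card_mono finite_PiE) auto
  also have "\<dots> = (\<Prod>p\<in>R. card ((\<lambda>w. restrict w (B p)) ` W))" using R by (rule card_PiE)
  finally show ?thesis .
qed simp

lemma card_le_mult_card_restrict:
  fixes W :: "('a \<Rightarrow> 'b) set"
  assumes "W \<subseteq> extensional (A \<union> B)"
  shows "card W \<le> card ((\<lambda>w. restrict w A) ` W) * card ((\<lambda>w. restrict w B) ` W)"
proof -
  have "card W \<le> (\<Prod>p\<in>{True, False}. card ((\<lambda>w. restrict w (if p then A else B)) ` W))"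
    by (rule card_le_prod_card_restrict[OF assms]) auto
  then show ?thesis by simp
qed

lemma card_restrict_singleton_le:
  assumes "\<And>w. w \<in> W \<Longrightarrow> w p \<in> A" "finite A"
  shows "card ((\<lambda>w. restrict w {p}) ` W) \<le> card A"
proof (rule card_inj_on_le[where f = "\<lambda>g. g p"])
  show "inj_on (\<lambda>g. g p) ((\<lambda>w. restrict w {p}) ` W)"
    by (rule inj_onI) (auto intro!: extensionalityI[of _ "{p}"])
qed (use assms in auto)

lemma card_restrict_doubleton_le:
  assumes "\<And>w. w \<in> W \<Longrightarrow> (w p, w p') \<in> A" "finite A"
  shows "card ((\<lambda>w. restrict w {p, p'}) ` W) \<le> card A"
proof (rule card_inj_on_le[where f = "\<lambda>g. (g p, g p')"])
  show "inj_on (\<lambda>g. (g p, g p')) ((\<lambda>w. restrict w {p, p'}) ` W)"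
    by (rule inj_onI) (auto intro!: extensionalityI[of _ "{p, p'}"])
qed (use assms in auto)

abbreviation fold_domain :: "nat \<Rightarrow> nat \<Rightarrow> nat set" where
  "fold_domain a b \<equiv> {Suc a..<Suc a + (b - a) div 2}"

definition fold_interval :: "nat \<Rightarrow> nat \<Rightarrow> (nat \<Rightarrow> 'a) \<Rightarrow> nat \<Rightarrow> 'a \<times> 'a" where
  "fold_interval a b w = (\<lambda>p\<in>fold_domain a b. (w p, w (a + b - p)))"

lemma fold_domain_iff: "p \<in> fold_domain a b \<longleftrightarrow> a < p \<and> 2 * p \<le> a + b"
proof -
  have "p - a - 1 < (b - a) div 2 \<longleftrightarrow> (p - a) * 2 \<le> b - a" if "a < p"
    using that less_eq_div_iff_mult_less_eq[of 2 "p - a" "b - a"] by linarith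
  then show ?thesis by (cases "a < p") auto
qed

lemma fold_interval_restrict: "fold_interval a b (restrict w {a<..<b}) = fold_interval a b w"
  unfolding fold_interval_def by (rule restrict_ext) (use fold_domain_iff in auto)

lemma restrict_eq_unfold_fold_interval:
  "restrict w {a<..<b} =
     (\<lambda>x\<in>{a<..<b}. if 2 * x \<le> a + b then fst (fold_interval a b w x)
                   else snd (fold_interval a b w (a + b - x)))"
proof (rule restrict_ext)
  fix x assume x: "x \<in> {a<..<b}"
  show "w x = (if 2 * x \<le> a + b then fst (fold_interval a b w x) else snd (fold_interval a b w (a + b - x)))"
  proof (cases "2 * x \<le> a + b")
    case True
    then have "x \<in> fold_domain a b" using x fold_domain_iff by auto
    then show ?thesis using True unfolding fold_interval_def by simp
  next
    case False
    then have "a + b - x \<in> fold_domain a b" using x fold_domain_iff by auto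
    moreover have "a + b - (a + b - x) = x" using x by simp
    ultimately show ?thesis using False unfolding fold_interval_def by simp
  qed
qed

lemma card_restrict_le_card_fold_interval:
  "card ((\<lambda>w. restrict w {a<..<b}) ` W) \<le> card (fold_interval a b ` W)"
proof (cases "finite ((\<lambda>w. restrict w {a<..<b}) ` W)")
  case True
  let ?unfold = "\<lambda>u. \<lambda>x\<in>{a<..<b}. if 2 * x \<le> a + b then fst (u x) else snd (u (a + b - x))"
  have "fold_interval a b ` W = fold_interval a b ` (\<lambda>w. restrict w {a<..<b}) ` W"
    by (simp add: image_image fold_interval_restrict)
  then have "finite (fold_interval a b ` W)" using True by simp
  moreover have "(\<lambda>w. restrict w {a<..<b}) ` W = ?unfold ` fold_interval a b ` W"
    unfolding image_image by (rule image_cong[OF refl]) (rule restrict_eq_unfold_fold_interval)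
  ultimately show ?thesis by (simp add: card_image_le)
qed simp

text \<open>A domino of shift \<open>t\<close> is a pair of positions \<open>i, i + t\<close>; the positions
  \<open>a, \<dots>, a + 2 t - 1\<close> split into \<open>t\<close> dominoes.\<close>

lemma card_restrict_domino_block:
  fixes U :: "(nat \<Rightarrow> 'a) set"
  assumes "finite B" "\<And>u i. u \<in> U \<Longrightarrow> a \<le> i \<Longrightarrow> i < a + t \<Longrightarrow> (u i, u (i + t)) \<in> B"
  shows "card ((\<lambda>u. restrict u {a..<a + 2 * t}) ` U) \<le> card B ^ t"
proof -
  let ?F = "(\<lambda>u. restrict u {a..<a + 2 * t}) ` U"
  have "{a..<a + 2 * t} \<subseteq> (\<Union>i\<in>{a..<a + t}. {i, i + t})"
  proof
    fix x assume "x \<in> {a..<a + 2 * t}"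
    then show "x \<in> (\<Union>i\<in>{a..<a + t}. {i, i + t})"
      by (cases "x < a + t") (auto intro!: bexI[where x = "x - t"])
  qed
  then have "card ?F \<le> (\<Prod>i\<in>{a..<a + t}. card ((\<lambda>u. restrict u {i, i + t}) ` ?F))"
    by (intro card_le_prod_card_restrict) auto
  also have "\<dots> \<le> (\<Prod>i\<in>{a..<a + t}. card B)"
    by (rule prod_mono) (use assms in \<open>auto intro!: card_restrict_doubleton_le\<close>)
  finally show ?thesis by simp
qed

lemma card_le_dominoes_aux:
  fixes U :: "(nat \<Rightarrow> 'a) set"
  assumes "U \<subseteq> PiE {a..<a + (2 * t * J + r)} (\<lambda>_. A)" "finite A" "finite B"
    and "\<And>u i. u \<in> U \<Longrightarrow> a \<le> i \<Longrightarrow> i + t < a + (2 * t * J + r) \<Longrightarrow> (u i, u (i + t)) \<in> B"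
  shows "card U \<le> card B ^ (t * J) * card A ^ r"
  using assms(1,4)
proof (induction J arbitrary: a U)
  case 0
  have "card U \<le> card (PiE {a..<a + r} (\<lambda>_. A))"
    using 0 assms(2) by (intro card_mono finite_PiE) auto
  then show ?case by (simp add: card_PiE)
next
  case (Suc J)
  let ?rest = "{a + 2 * t..<a + 2 * t + (2 * t * J + r)}"
  have dom: "{a..<a + (2 * t * Suc J + r)} = {a..<a + 2 * t} \<union> ?rest" by auto
  have "card U \<le> card ((\<lambda>u. restrict u {a..<a + 2 * t}) ` U) * card ((\<lambda>u. restrict u ?rest) ` U)"
    using Suc.prems(1) dom by (intro card_le_mult_card_restrict) (auto simp: PiE_def)
  also have "\<dots> \<le> card B ^ t * (card B ^ (t * J) * card A ^ r)"
  proof (rule mult_le_mono)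
    show "card ((\<lambda>u. restrict u {a..<a + 2 * t}) ` U) \<le> card B ^ t"
      using Suc.prems(2) assms(3) by (intro card_restrict_domino_block) auto
    show "card ((\<lambda>u. restrict u ?rest) ` U) \<le> card B ^ (t * J) * card A ^ r"
    proof (rule Suc.IH)
      show "(\<lambda>u. restrict u ?rest) ` U \<subseteq> PiE ?rest (\<lambda>_. A)"
        using Suc.prems(1) by (auto simp: PiE_def Pi_def)
    qed (use Suc.prems(2) in auto)
  qed
  finally show ?case by (simp add: power_add mult.assoc)
qed

lemma card_le_dominoes:
  fixes U :: "(nat \<Rightarrow> 'a) set"
  assumes "U \<subseteq> PiE {a..<a + H} (\<lambda>_. A)" "finite A" "finite B"
    and "\<And>u i. u \<in> U \<Longrightarrow> a \<le> i \<Longrightarrow> i + t < a + H \<Longrightarrow> (u i, u (i + t)) \<in> B"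
  shows "card U \<le> card B ^ (t * (H div (2 * t))) * card A ^ (H mod (2 * t))"
  using card_le_dominoes_aux[of U a t "H div (2 * t)" "H mod (2 * t)"] assms by simp

lemma card_restrict_interval_le:
  assumes "\<And>w. w \<in> W \<Longrightarrow> fold_interval a b w \<in> PiE (fold_domain a b) (\<lambda>_. A)" "finite A"
  shows "card ((\<lambda>w. restrict w {a<..<b}) ` W) \<le> card A ^ ((b - a) div 2)"
proof -
  have "card ((\<lambda>w. restrict w {a<..<b}) ` W) \<le> card (fold_interval a b ` W)"
    by (rule card_restrict_le_card_fold_interval)
  also have "\<dots> \<le> card (PiE (fold_domain a b) (\<lambda>_. A))"
    using assms by (intro card_mono finite_PiE) auto
  finally show ?thesis by (simp add: card_PiE)
qed

section \<open>Kunz vectors of small multiplicity\<close>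

lemma kunz_vectorsD:
  assumes "v \<in> kunz_vectors f m"
  shows "v \<in> extensional {1..<m}"
    and "\<And>r. 0 < r \<Longrightarrow> r < m \<Longrightarrow> 1 \<le> v r"
    and "\<And>r. 0 < r \<Longrightarrow> r < m \<Longrightarrow> v r \<le> f div m + 1"
    and "\<And>r. f mod m < r \<Longrightarrow> r < m \<Longrightarrow> v r \<le> f div m"
    and "\<And>r r'. 0 < r \<Longrightarrow> 0 < r' \<Longrightarrow> r + r' < m \<Longrightarrow> v (r + r') \<le> v r + v r'"
    and "\<And>r r'. 0 < r \<Longrightarrow> 0 < r' \<Longrightarrow> r + r' = f mod m \<Longrightarrow> f div m + 1 \<le> v r + v r'"
    and "\<And>r r'. r < m \<Longrightarrow> r' < m \<Longrightarrow> r + r' = m + f mod m \<Longrightarrow> f div m \<le> v r + v r'"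
  using assms unfolding kunz_vectors_def by auto

definition bounded_pairs :: "nat \<Rightarrow> nat \<Rightarrow> (nat \<times> nat) set" where
  "bounded_pairs Q T = {(x, y). 1 \<le> x \<and> x \<le> Q \<and> 1 \<le> y \<and> y \<le> Q \<and> T \<le> x + y}"

lemma finite_bounded_pairs: "finite (bounded_pairs Q T)"
  by (rule finite_subset[of _ "{1..Q} \<times> {1..Q}"]) (auto simp: bounded_pairs_def)

lemma card_bounded_pairs_le:
  assumes "3 \<le> T"
  shows "card (bounded_pairs Q T) \<le> Q\<^sup>2 - 1"
proof (cases "Q = 0")
  case False
  have "bounded_pairs Q T \<subseteq> {1..Q} \<times> {1..Q} - {(1, 1)}"
    using assms unfolding bounded_pairs_def by auto
  then have "card (bounded_pairs Q T) \<le> card ({1..Q} \<times> {1..Q} - {(1, 1)})" by (intro card_mono) auto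
  also have "\<dots> = Q\<^sup>2 - 1" using False by (simp add: card_cartesian_product power2_eq_square)
  finally show ?thesis .
next
  case True
  then have "bounded_pairs Q T = {}" unfolding bounded_pairs_def by auto
  then show ?thesis by simp
qed

lemma fold_kunz_vector_low:
  assumes v: "v \<in> kunz_vectors f m" and "0 < m"
  shows "fold_interval 0 (f mod m) v
    \<in> PiE (fold_domain 0 (f mod m)) (\<lambda>_. bounded_pairs (f div m + 1) (f div m + 1))"
  unfolding fold_interval_def restrict_PiE_iff
proof
  fix p assume "p \<in> fold_domain 0 (f mod m)"
  then have p: "0 < p" "p < m" "0 < f mod m - p" "f mod m - p < m" "p + (f mod m - p) = f mod m"
    using fold_domain_iff mod_less_divisor[OF \<open>0 < m\<close>, of f] by auto
  show "(v p, v (0 + f mod m - p)) \<in> bounded_pairs (f div m + 1) (f div m + 1)"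
    using kunz_vectorsD(2,3)[OF v p(1,2)] kunz_vectorsD(2,3)[OF v p(3,4)] kunz_vectorsD(6)[OF v p(1,3,5)]
    unfolding bounded_pairs_def by simp
qed

lemma fold_kunz_vector_high:
  assumes v: "v \<in> kunz_vectors f m" and "0 < m"
  shows "fold_interval (f mod m) m v \<in> PiE (fold_domain (f mod m) m) (\<lambda>_. bounded_pairs (f div m) (f div m))"
  unfolding fold_interval_def restrict_PiE_iff
proof
  fix p assume "p \<in> fold_domain (f mod m) m"
  then have p: "f mod m < p" "p < m" "f mod m < f mod m + m - p" "f mod m + m - p < m"
      "p + (f mod m + m - p) = m + f mod m"
    using fold_domain_iff mod_less_divisor[OF \<open>0 < m\<close>, of f] by auto
  show "(v p, v (f mod m + m - p)) \<in> bounded_pairs (f div m) (f div m)"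
    using kunz_vectorsD(2,4)[OF v _ p(2)] kunz_vectorsD(2,4)[OF v _ p(4)] kunz_vectorsD(7)[OF v p(2,4,5)] p(1,3)
    unfolding bounded_pairs_def by simp
qed

lemma card_restrict_kunz_vectors_low:
  assumes "0 < m" "3 \<le> f div m + 1"
  shows "card ((\<lambda>v. restrict v {0<..<f mod m}) ` kunz_vectors f m) \<le> ((f div m + 1)\<^sup>2 - 1) ^ (f mod m div 2)"
proof -
  have "card ((\<lambda>v. restrict v {0<..<f mod m}) ` kunz_vectors f m)
      \<le> card (bounded_pairs (f div m + 1) (f div m + 1)) ^ ((f mod m - 0) div 2)"
    using fold_kunz_vector_low assms(1) by (intro card_restrict_interval_le finite_bounded_pairs)
  also have "\<dots> \<le> ((f div m + 1)\<^sup>2 - 1) ^ (f mod m div 2)"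
    using card_bounded_pairs_le[OF assms(2)] by (simp add: power_mono)
  finally show ?thesis .
qed

lemma card_restrict_kunz_vectors_high:
  assumes "0 < m" "3 \<le> f div m"
  shows "card ((\<lambda>v. restrict v {f mod m<..<m}) ` kunz_vectors f m) \<le> ((f div m)\<^sup>2 - 1) ^ ((m - f mod m) div 2)"
proof -
  have "card ((\<lambda>v. restrict v {f mod m<..<m}) ` kunz_vectors f m)
      \<le> card (bounded_pairs (f div m) (f div m)) ^ ((m - f mod m) div 2)"
    using fold_kunz_vector_high assms(1) by (intro card_restrict_interval_le finite_bounded_pairs)
  also have "\<dots> \<le> ((f div m)\<^sup>2 - 1) ^ ((m - f mod m) div 2)"
    using card_bounded_pairs_le[OF assms(2)] by (simp add: power_mono)
  finally show ?thesis .
qed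

lemma card_kunz_vectors_le_split:
  assumes "0 < m" "0 < f mod m"
  shows "card (kunz_vectors f m) \<le> card ((\<lambda>v. restrict v {0<..<f mod m}) ` kunz_vectors f m)
    * (f div m + 1) * card ((\<lambda>v. restrict v {f mod m<..<m}) ` kunz_vectors f m)"
proof -
  let ?s = "f mod m" and ?K = "kunz_vectors f m"
  let ?B = "\<lambda>p::nat. if p = 0 then {0<..<?s} else if p = 1 then {?s} else {?s<..<m}"
  have m: "?s < m" using assms(1) by simp
  have "card ?K \<le> (\<Prod>p\<in>{0, 1, 2}. card ((\<lambda>v. restrict v (?B p)) ` ?K))"
  proof (rule card_le_prod_card_restrict[of _ "{1..<m}"])
    show "?K \<subseteq> extensional {1..<m}" using kunz_vectorsD(1) by blast
    show "{1..<m} \<subseteq> (\<Union>p\<in>{0, 1, 2}. ?B p)" using m by auto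
  qed simp
  also have "\<dots> = card ((\<lambda>v. restrict v {0<..<?s}) ` ?K) * card ((\<lambda>v. restrict v {?s}) ` ?K)
      * card ((\<lambda>v. restrict v {?s<..<m}) ` ?K)"
    by (simp add: mult.assoc)
  also have "\<dots> \<le> card ((\<lambda>v. restrict v {0<..<?s}) ` ?K) * card {1..f div m + 1}
      * card ((\<lambda>v. restrict v {?s<..<m}) ` ?K)"
    using kunz_vectorsD(2,3) assms m by (intro mult_le_mono order_refl card_restrict_singleton_le) auto
  finally show ?thesis by simp
qed


lemma card_domino_pairs_le:
  "card {(x, y) \<in> bounded_pairs 3 3 \<times> bounded_pairs 3 3. fst x = 1 \<longrightarrow> fst y \<le> 2} \<le> 63"
proof -
  let ?P = "bounded_pairs 3 3 \<times> bounded_pairs 3 3"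
  have "card {(x, y) \<in> ?P. fst x = 1 \<longrightarrow> fst y \<le> 2} \<le> card (?P - {((1, 2), (3, 1))})"
    by (rule card_mono) (auto simp: finite_bounded_pairs)
  also have "\<dots> = card (bounded_pairs 3 3) * card (bounded_pairs 3 3) - 1"
    by (simp add: card_cartesian_product finite_bounded_pairs bounded_pairs_def)
  also have "\<dots> \<le> 63" using card_bounded_pairs_le[of 3 3] mult_le_mono[of _ 8 _ 8] by fastforce
  finally show ?thesis .
qed

lemma card_pair_functions_dominoes:
  fixes U :: "(nat \<Rightarrow> nat \<times> nat) set"
  assumes U: "U \<subseteq> PiE {c..<c + H} (\<lambda>_. bounded_pairs 3 3)" and "0 < t"
    and domino: "\<And>u i. u \<in> U \<Longrightarrow> c \<le> i \<Longrightarrow> i + t < c + H \<Longrightarrow> fst (u i) = 1 \<Longrightarrow> fst (u (i + t)) \<le> 2"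
  shows "real (card U) \<le> 8 ^ H * (63 / 64) ^ (t * (H div (2 * t)))"
proof -
  define J where "J = H div (2 * t)"
  define r where "r = H mod (2 * t)"
  have H: "H = 2 * (t * J) + r"
    unfolding J_def r_def using div_mult_mod_eq[of H "2 * t"] by (simp add: mult_ac)
  let ?B = "{(x, y) \<in> bounded_pairs 3 3 \<times> bounded_pairs 3 3. fst x = 1 \<longrightarrow> fst y \<le> 2}"
  have "finite ?B" by (rule finite_subset[of _ "bounded_pairs 3 3 \<times> bounded_pairs 3 3"]) (auto simp: finite_bounded_pairs)
  then have "card U \<le> card ?B ^ (t * J) * card (bounded_pairs 3 3) ^ r"
    unfolding J_def r_def
    by (rule card_le_dominoes[OF U finite_bounded_pairs]) (use U domino in \<open>auto simp: PiE_def Pi_def\<close>)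
  also have "\<dots> \<le> 63 ^ (t * J) * 8 ^ r"
    using card_domino_pairs_le card_bounded_pairs_le[of 3 3] by (intro mult_le_mono power_mono) simp_all
  finally have "real (card U) \<le> real (63 ^ (t * J) * 8 ^ r)" by (simp only: of_nat_le_iff)
  also have "\<dots> = 8 ^ H * (63 / 64) ^ (t * J)"
    by (simp add: H power_add power_mult power_divide)
  finally show ?thesis unfolding J_def .
qed

lemma card_pair_functions_low:
  fixes U :: "(nat \<Rightarrow> nat \<times> nat) set"
  assumes U: "U \<subseteq> PiE {c..<c + H} (\<lambda>_. bounded_pairs 3 3)"
    and low: "\<And>u i. u \<in> U \<Longrightarrow> c \<le> i \<Longrightarrow> i < c + H \<Longrightarrow> i < t \<Longrightarrow> 2 \<le> fst (u i)"
  shows "real (card U) \<le> 8 ^ H * (63 / 64) ^ (min t (c + H) - c)"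
proof -
  define g where "g = min t (c + H) - c"
  let ?P6 = "{x \<in> bounded_pairs 3 3. 2 \<le> fst x}"
  let ?A = "\<lambda>i. if i < c + g then ?P6 else bounded_pairs 3 3"
  have gH: "g \<le> H" unfolding g_def by simp
  have "card ?P6 \<le> card ({2, 3::nat} \<times> {1, 2, 3::nat})"
    by (rule card_mono) (auto simp: bounded_pairs_def)
  then have P6: "card ?P6 \<le> 6" by (simp add: card_cartesian_product)
  have "U \<subseteq> PiE {c..<c + H} ?A"
  proof
    fix u assume u: "u \<in> U"
    have "u i \<in> ?A i" if "c \<le> i" "i < c + H" for i
      using U u low[OF u that] that unfolding g_def by (auto simp: PiE_iff)
    then show "u \<in> PiE {c..<c + H} ?A" using U u by (auto simp: PiE_iff)
  qed
  then have "card U \<le> card (PiE {c..<c + H} ?A)"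
    by (intro card_mono finite_PiE) (auto simp: finite_bounded_pairs)
  also have "\<dots> = (\<Prod>i\<in>{c..<c + g}. card (?A i)) * (\<Prod>i\<in>{c + g..<c + H}. card (?A i))"
  proof -
    have "{c..<c + H} = {c..<c + g} \<union> {c + g..<c + H}" using gH by auto
    then show ?thesis by (simp add: card_PiE prod.union_disjoint)
  qed
  also have "\<dots> = card ?P6 ^ g * card (bounded_pairs 3 3) ^ (H - g)" by simp
  also have "\<dots> \<le> 6 ^ g * 8 ^ (H - g)"
    using P6 card_bounded_pairs_le[of 3 3] by (intro mult_le_mono power_mono) simp_all
  finally have "real (card U) \<le> real (6 ^ g * 8 ^ (H - g))" by (simp only: of_nat_le_iff)
  also have "\<dots> \<le> (8 * (63 / 64)) ^ g * 8 ^ (H - g)" by (simp add: mult_right_mono power_mono)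
  also have "\<dots> = 8 ^ H * (63 / 64) ^ g"
  proof -
    have "(8::real) ^ H = 8 ^ g * 8 ^ (H - g)" using gH by (simp flip: power_add)
    then show ?thesis by (simp only: power_mult_distrib) (simp add: mult_ac)
  qed
  finally show ?thesis unfolding g_def .
qed

text \<open>A first coordinate \<open>1\<close> early on forces many dominoes, a late one many coordinates \<open>\<ge> 2\<close>:
  either way a fixed fraction of the \<open>H\<close> pairs loses a factor \<open>63 / 64\<close>.\<close>

lemma card_pair_functions_gain:
  fixes U :: "(nat \<Rightarrow> nat \<times> nat) set"
  assumes U: "U \<subseteq> PiE {c..<c + H} (\<lambda>_. bounded_pairs 3 3)" and t: "0 < t"
    and low: "\<And>u i. u \<in> U \<Longrightarrow> c \<le> i \<Longrightarrow> i < c + H \<Longrightarrow> i < t \<Longrightarrow> 2 \<le> fst (u i)"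
    and domino: "\<And>u i. u \<in> U \<Longrightarrow> c \<le> i \<Longrightarrow> i + t < c + H \<Longrightarrow> fst (u i) = 1 \<Longrightarrow> fst (u (i + t)) \<le> 2"
  shows "\<exists>g. real (card U) \<le> 8 ^ H * (63 / 64) ^ g \<and> H \<le> 4 * (g + c)"
proof (cases "4 * t \<le> H")
  case True
  define J where "J = H div (2 * t)"
  have "H = 2 * (t * J) + H mod (2 * t)" "H mod (2 * t) < 2 * t"
    unfolding J_def using div_mult_mod_eq[of H "2 * t"] t by (simp_all add: mult_ac)
  then have "H \<le> 4 * (t * J + c)" using True by (simp add: algebra_simps)
  moreover have "real (card U) \<le> 8 ^ H * (63 / 64) ^ (t * J)"
    unfolding J_def by (rule card_pair_functions_dominoes[OF U t]) (use domino in blast)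
  ultimately show ?thesis by blast
next
  case False
  then have "H \<le> 4 * ((min t (c + H) - c) + c)" by auto
  moreover have "real (card U) \<le> 8 ^ H * (63 / 64) ^ (min t (c + H) - c)"
    by (rule card_pair_functions_low[OF U]) (use low in blast)
  ultimately show ?thesis by blast
qed

text \<open>\<open>t\<close> stands for the least \<open>r\<close> with \<open>v r = 1\<close>, or \<open>m\<close> if there is none; then
  \<open>v (r + t) \<le> v r + 1\<close> by subadditivity.\<close>

definition kunz_vectors_one_at :: "nat \<Rightarrow> nat \<Rightarrow> nat \<Rightarrow> (nat \<Rightarrow> nat) set" where
  "kunz_vectors_one_at t f m = {v \<in> kunz_vectors f m. (\<forall>r. 0 < r \<longrightarrow> r < t \<longrightarrow> 2 \<le> v r) \<and>
     (\<forall>r. 0 < r \<longrightarrow> r + t < m \<longrightarrow> v r = 1 \<longrightarrow> v (r + t) \<le> 2)}"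

lemma kunz_vectors_subset_UN_one_at:
  assumes "0 < m"
  shows "kunz_vectors f m \<subseteq> (\<Union>t\<in>{1..m}. kunz_vectors_one_at t f m)"
proof
  fix v assume v: "v \<in> kunz_vectors f m"
  show "v \<in> (\<Union>t\<in>{1..m}. kunz_vectors_one_at t f m)"
  proof (cases "\<exists>r. 0 < r \<and> r < m \<and> v r = 1")
    case True
    define t where "t = (LEAST r. 0 < r \<and> r < m \<and> v r = 1)"
    have t: "0 < t" "t < m" "v t = 1" using LeastI_ex[OF True] unfolding t_def by auto
    have "2 \<le> v r" if "0 < r" "r < t" for r
      using not_less_Least[of r "\<lambda>r. 0 < r \<and> r < m \<and> v r = 1"] kunz_vectorsD(2)[OF v, of r] that t
      unfolding t_def by fastforce
    moreover have "v (r + t) \<le> 2" if "0 < r" "r + t < m" "v r = 1" for r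
      using kunz_vectorsD(5)[OF v that(1) t(1) that(2)] that t by simp
    ultimately have "v \<in> kunz_vectors_one_at t f m" using v unfolding kunz_vectors_one_at_def by blast
    then show ?thesis using t by auto
  next
    case False
    have "2 \<le> v r" if "0 < r" "r < m" for r
    proof -
      have "v r \<noteq> 1" using False that by auto
      then show ?thesis using kunz_vectorsD(2)[OF v that] by linarith
    qed
    then have "v \<in> kunz_vectors_one_at m f m" using v unfolding kunz_vectors_one_at_def by auto
    then show ?thesis using assms by auto
  qed
qed

lemma card_restrict_kunz_vectors_one_at:
  assumes "a < b" "b \<le> m" "0 < t"
    and fold: "\<And>v. v \<in> kunz_vectors f m \<Longrightarrow> fold_interval a b v \<in> PiE (fold_domain a b) (\<lambda>_. bounded_pairs 3 3)"
  shows "\<exists>g. real (card ((\<lambda>v. restrict v {a<..<b}) ` kunz_vectors_one_at t f m))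
    \<le> 8 ^ ((b - a) div 2) * (63 / 64) ^ g \<and> (b - a) div 2 \<le> 4 * (g + Suc a)"
proof -
  let ?W = "kunz_vectors_one_at t f m"
  have W: "v \<in> kunz_vectors f m" "\<And>r. 0 < r \<Longrightarrow> r < t \<Longrightarrow> 2 \<le> v r"
      "\<And>r. 0 < r \<Longrightarrow> r + t < m \<Longrightarrow> v r = 1 \<Longrightarrow> v (r + t) \<le> 2" if "v \<in> ?W" for v
    using that unfolding kunz_vectors_one_at_def by auto
  have fst_fold: "fst (fold_interval a b v i) = v i" if "i \<in> fold_domain a b" for v i
    using that unfolding fold_interval_def by simp
  obtain g where "real (card (fold_interval a b ` ?W)) \<le> 8 ^ ((b - a) div 2) * (63 / 64) ^ g"
    "(b - a) div 2 \<le> 4 * (g + Suc a)"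
  proof (rule exE[OF card_pair_functions_gain[OF _ \<open>0 < t\<close>]])
    show "fold_interval a b ` ?W \<subseteq> PiE (fold_domain a b) (\<lambda>_. bounded_pairs 3 3)"
      using fold W(1) by blast
    show "2 \<le> fst (u i)" if u: "u \<in> fold_interval a b ` ?W" and i: "Suc a \<le> i"
      "i < Suc a + (b - a) div 2" "i < t" for u i
    proof -
      obtain v where v: "v \<in> ?W" "u = fold_interval a b v" using u by blast
      have dom: "i \<in> fold_domain a b" using i by simp
      show ?thesis using v W(2)[OF v(1), of i] i fst_fold[OF dom, of v] by simp
    qed
    show "fst (u (i + t)) \<le> 2" if u: "u \<in> fold_interval a b ` ?W" and i: "Suc a \<le> i"
      "i + t < Suc a + (b - a) div 2" "fst (u i) = 1" for u i
    proof -
      obtain v where v: "v \<in> ?W" "u = fold_interval a b v" using u by blast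
      have dom: "i \<in> fold_domain a b" "i + t \<in> fold_domain a b" using i by auto
      then have "2 * (i + t) \<le> a + b" using fold_domain_iff by blast
      then have "i + t < m" using assms(1,2) by (simp add: algebra_simps)
      then show ?thesis using i v W(3)[OF v(1), of i] fst_fold[OF dom(1), of v] fst_fold[OF dom(2), of v] by simp
    qed
  qed blast
  moreover have "card ((\<lambda>v. restrict v {a<..<b}) ` ?W) \<le> card (fold_interval a b ` ?W)"
    by (rule card_restrict_le_card_fold_interval)
  ultimately show ?thesis by (meson of_nat_le_iff order_trans)
qed


lemma domino_ratio_pow_le_powr:
  assumes "H \<le> 4 * (g + c)"
  shows "(63 / 64 :: real) ^ g \<le> (63 / 64) powr (real H / 4 - real c)"
proof -
  have "(63 / 64 :: real) ^ g = (63 / 64) powr real g" by (simp add: powr_realpow)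
  also have "\<dots> \<le> (63 / 64) powr (real H / 4 - real c)"
    using assms by (intro powr_mono') (simp_all add: field_simps flip: of_nat_add of_nat_mult of_nat_le_iff)
  finally show ?thesis .
qed

lemma card_restrict_kunz_vectors_interval:
  assumes "a < b" "b \<le> m"
    and fold: "\<And>v. v \<in> kunz_vectors f m \<Longrightarrow> fold_interval a b v \<in> PiE (fold_domain a b) (\<lambda>_. bounded_pairs 3 3)"
  shows "real (card ((\<lambda>v. restrict v {a<..<b}) ` kunz_vectors f m))
    \<le> real m * 8 ^ ((b - a) div 2) * (63 / 64) powr (real ((b - a) div 2) / 4 - real (Suc a))"
proof -
  let ?H = "(b - a) div 2" and ?R = "\<lambda>W. (\<lambda>v. restrict v {a<..<b}) ` W"
  have "0 < m" using assms(1,2) by simp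
  then have "?R (kunz_vectors f m) \<subseteq> ?R (\<Union>t\<in>{1..m}. kunz_vectors_one_at t f m)"
    by (intro image_mono kunz_vectors_subset_UN_one_at)
  also have "\<dots> = (\<Union>t\<in>{1..m}. ?R (kunz_vectors_one_at t f m))" by (rule image_UN)
  finally have sub: "?R (kunz_vectors f m) \<subseteq> (\<Union>t\<in>{1..m}. ?R (kunz_vectors_one_at t f m))" .
  have "finite (kunz_vectors_one_at t f m)" for t
    by (rule finite_subset[OF _ finite_kunz_vectors]) (auto simp: kunz_vectors_one_at_def)
  then have "finite (\<Union>t\<in>{1..m}. ?R (kunz_vectors_one_at t f m))" by blast
  then have "card (?R (kunz_vectors f m)) \<le> card (\<Union>t\<in>{1..m}. ?R (kunz_vectors_one_at t f m))"
    using sub by (rule card_mono)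
  also have "\<dots> \<le> (\<Sum>t\<in>{1..m}. card (?R (kunz_vectors_one_at t f m)))" by (rule card_UN_le) simp
  finally have "real (card (?R (kunz_vectors f m))) \<le> real (\<Sum>t\<in>{1..m}. card (?R (kunz_vectors_one_at t f m)))"
    by (simp only: of_nat_le_iff)
  also have "\<dots> = (\<Sum>t\<in>{1..m}. real (card (?R (kunz_vectors_one_at t f m))))" by simp
  also have "\<dots> \<le> (\<Sum>t\<in>{1..m}. 8 ^ ?H * (63 / 64) powr (real ?H / 4 - real (Suc a)))"
  proof (rule sum_mono)
    fix t :: nat assume "t \<in> {1..m}"
    then have "0 < t" by simp
    then obtain g where g: "real (card (?R (kunz_vectors_one_at t f m))) \<le> 8 ^ ?H * (63 / 64) ^ g"
      "?H \<le> 4 * (g + Suc a)"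
      using card_restrict_kunz_vectors_one_at[OF assms(1,2) _ fold] by blast
    note g(1)
    also have "8 ^ ?H * (63 / 64) ^ g \<le> 8 ^ ?H * (63 / 64 :: real) powr (real ?H / 4 - real (Suc a))"
      using domino_ratio_pow_le_powr[OF g(2)] by (rule mult_left_mono) simp
    finally show "real (card (?R (kunz_vectors_one_at t f m))) \<le> 8 ^ ?H * (63 / 64) powr (real ?H / 4 - real (Suc a))" .
  qed
  finally show ?thesis by simp
qed


lemma two_pow_le_sqrt_two_pow:
  assumes "2 * k \<le> f"
  shows "(2::real) ^ k \<le> sqrt 2 ^ f"
proof -
  have "(2::real) ^ k = sqrt 2 ^ (2 * k)" by (simp add: power_mult)
  also have "\<dots> \<le> sqrt 2 ^ f" by (rule power_increasing[OF assms]) simp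
  finally show ?thesis .
qed

lemma card_restrict_empty_le:
  fixes W :: "('a \<Rightarrow> 'b) set"
  shows "card ((\<lambda>v. restrict v {}) ` W) \<le> 1"
proof -
  have "card ((\<lambda>v. restrict v {}) ` W) \<le> card {\<lambda>_::'a. undefined :: 'b}" by (rule card_mono) auto
  then show ?thesis by simp
qed

lemma card_kunz_vectors_div_eq_2:
  assumes m: "2 \<le> m" and f: "f = 3 * m - 1"
  shows "real (card (kunz_vectors f m)) \<le> 3 * real m * sqrt 2 ^ f * (63 / 64) powr ((real f - 99) / 32)"
proof -
  have q: "f div m = 2" by (rule div_nat_eqI) (use m f in auto)
  then have s: "f mod m = m - 1" using m f mult_div_mod_eq[of m f] by simp
  define H where "H = (m - 1) div 2"
  let ?K = "kunz_vectors f m"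
  have "card ?K \<le> card ((\<lambda>v. restrict v {0<..<m - 1}) ` ?K) * 3 * card ((\<lambda>v. restrict v {}) ` ?K)"
  proof -
    have "{m - 1<..<m} = {}" by auto
    then show ?thesis using card_kunz_vectors_le_split[of m f] m q s by simp
  qed
  also have "\<dots> \<le> card ((\<lambda>v. restrict v {0<..<m - 1}) ` ?K) * 3"
    using card_restrict_empty_le[of ?K] by simp
  finally have "real (card ?K) \<le> real (card ((\<lambda>v. restrict v {0<..<m - 1}) ` ?K)) * 3"
    by (simp only: of_nat_le_iff of_nat_mult of_nat_numeral)
  also have "\<dots> \<le> real m * 8 ^ H * (63 / 64) powr (real H / 4 - 1) * 3"
    using card_restrict_kunz_vectors_interval[of 0 "m - 1" m f] fold_kunz_vector_low[of _ f m] m q s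
    unfolding H_def by simp
  also have "\<dots> \<le> real m * sqrt 2 ^ f * (63 / 64) powr ((real f - 99) / 32) * 3"
  proof (intro mult_right_mono mult_left_mono mult_mono)
    show "(8::real) ^ H \<le> sqrt 2 ^ f"
      using two_pow_le_sqrt_two_pow[of "3 * H" f] m f unfolding H_def by (simp add: power_mult)
    have "real m \<le> 2 * real H + 2" unfolding H_def by linarith
    then show "(63 / 64 :: real) powr (real H / 4 - 1) \<le> (63 / 64) powr ((real f - 99) / 32)"
      using m f by (intro powr_mono') (simp_all add: of_nat_diff)
  qed simp_all
  finally show ?thesis by (simp add: mult_ac)
qed


lemma card_kunz_vectors_div_eq_3:
  assumes m: "0 < m" and q: "f div m = 3" and s: "0 < f mod m"
  shows "real (card (kunz_vectors f m)) \<le> 4 * real m * sqrt 2 ^ f * (63 / 64) powr ((real f - 99) / 32)"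
proof -
  define H1 where "H1 = f mod m div 2"
  define H2 where "H2 = (m - f mod m) div 2"
  let ?K = "kunz_vectors f m" and ?\<theta> = "63 / 64 :: real"
  let ?e = "real H2 / 4 - real (Suc (f mod m))"
  have sm: "f mod m < m" using m by simp
  have f: "f = 3 * m + f mod m" using q mult_div_mod_eq[of m f] by simp
  have "card ?K \<le> card ((\<lambda>v. restrict v {0<..<f mod m}) ` ?K) * 4 * card ((\<lambda>v. restrict v {f mod m<..<m}) ` ?K)"
    using card_kunz_vectors_le_split[OF m s] q by simp
  also have "\<dots> \<le> 15 ^ H1 * 4 * card ((\<lambda>v. restrict v {f mod m<..<m}) ` ?K)"
    using card_restrict_kunz_vectors_low[of m f] m q unfolding H1_def by (intro mult_le_mono1) simp
  finally have "real (card ?K) \<le> real (15 ^ H1 * 4 * card ((\<lambda>v. restrict v {f mod m<..<m}) ` ?K))"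
    by (simp only: of_nat_le_iff)
  also have "\<dots> = 15 ^ H1 * 4 * real (card ((\<lambda>v. restrict v {f mod m<..<m}) ` ?K))" by simp
  also have "\<dots> \<le> (16 ^ H1 * ?\<theta> ^ (4 * H1)) * 4
      * (real m * 8 ^ H2 * ?\<theta> powr (real H2 / 4 - real (Suc (f mod m))))"
  proof (intro mult_mono mult_right_mono)
    have "(15::real) ^ H1 \<le> (16 * ?\<theta> ^ 4) ^ H1" by (rule power_mono) (simp_all add: power_divide)
    then show "(15::real) ^ H1 \<le> 16 ^ H1 * ?\<theta> ^ (4 * H1)" by (simp add: power_mult_distrib power_mult)
    show "real (card ((\<lambda>v. restrict v {f mod m<..<m}) ` ?K))
        \<le> real m * 8 ^ H2 * ?\<theta> powr (real H2 / 4 - real (Suc (f mod m)))"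
      unfolding H2_def
    proof (rule card_restrict_kunz_vectors_interval[OF sm order_refl])
      show "fold_interval (f mod m) m v \<in> PiE (fold_domain (f mod m) m) (\<lambda>_. bounded_pairs 3 3)"
        if "v \<in> ?K" for v
        using fold_kunz_vector_high[OF that m] q by simp
    qed
  qed simp_all
  also have "\<dots> = 4 * real m * (16 ^ H1 * 8 ^ H2) * (?\<theta> ^ (4 * H1) * ?\<theta> powr ?e)"
    by (simp add: mult_ac)
  also have "\<dots> = 4 * real m * 2 ^ (4 * H1 + 3 * H2) * ?\<theta> powr (4 * real H1 + ?e)"
  proof -
    have "?\<theta> ^ (4 * H1) = ?\<theta> powr real (4 * H1)" by (rule powr_realpow[symmetric]) simp
    then show ?thesis by (simp add: powr_add power_add power_mult)
  qed
  also have "\<dots> \<le> 4 * real m * sqrt 2 ^ f * ?\<theta> powr ((real f - 99) / 32)"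
  proof (intro mult_mono mult_left_mono)
    show "(2::real) ^ (4 * H1 + 3 * H2) \<le> sqrt 2 ^ f"
    proof (rule two_pow_le_sqrt_two_pow)
      have "2 * H1 \<le> f mod m" "2 * H2 \<le> m - f mod m" unfolding H1_def H2_def by auto
      then show "2 * (4 * H1 + 3 * H2) \<le> f" using f sm by (simp add: algebra_simps)
    qed
    have "real (f mod m) \<le> 2 * real H1 + 1" "real m - real (f mod m) \<le> 2 * real H2 + 1"
      unfolding H1_def H2_def using sm by linarith+
    then show "?\<theta> powr (4 * real H1 + ?e) \<le> ?\<theta> powr ((real f - 99) / 32)"
      using f by (intro powr_mono') (simp_all add: of_nat_diff)
  qed simp_all
  finally show ?thesis .
qed


lemma sqrt_pow_eq_powr:
  assumes "0 < x"
  shows "sqrt x ^ n = x powr (real n / 2)"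
proof -
  have "sqrt x ^ n = (x powr (1 / 2)) ^ n" using assms by (simp add: powr_half_sqrt)
  also have "\<dots> = (x powr (1 / 2)) powr real n" using assms by (simp add: powr_realpow)
  also have "\<dots> = x powr (real n / 2)" by (simp add: powr_powr)
  finally show ?thesis .
qed

lemma square_minus_one_le_pow:
  assumes "4 \<le> Q"
  shows "real (Q\<^sup>2 - 1) \<le> (63 / 32) ^ Q"
  using assms
proof (induction Q rule: dec_induct)
  case base
  then show ?case by (simp add: power_divide)
next
  case (step n)
  have "real (Suc n ^ 2 - 1) = real n ^ 2 + 2 * real n"
    by (simp add: power2_eq_square of_nat_diff algebra_simps)
  also have "\<dots> \<le> (63 / 32) * (real n ^ 2 - 1)"
  proof -
    have n4: "4 \<le> real n" using step(1) by simp
    then have "4 * real n \<le> real n * real n" by (intro mult_right_mono) auto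
    then have "0 \<le> (31 / 32) * real n ^ 2 - 2 * real n - 63 / 32"
      using n4 unfolding power2_eq_square by linarith
    then show ?thesis by (simp add: algebra_simps)
  qed
  also have "real n ^ 2 - 1 = real (n\<^sup>2 - 1)" using step(1) by (simp add: of_nat_diff)
  also have "(63 / 32) * real (n\<^sup>2 - 1) \<le> (63 / 32) * (63 / 32) ^ n" using step(3) by simp
  finally show ?case by simp
qed

lemma pow_63_32_le_sqrt_two_pow:
  assumes "2 * e \<le> f"
  shows "(63 / 32 :: real) ^ e \<le> sqrt 2 ^ f * (63 / 64) powr ((real f - 99) / 32)"
proof -
  have "(63 / 32 :: real) ^ e = sqrt (63 / 32) ^ (2 * e)" unfolding power_mult by simp
  also have "\<dots> \<le> sqrt (63 / 32) ^ f" by (rule power_increasing[OF assms]) simp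
  also have "\<dots> = sqrt 2 ^ f * sqrt (63 / 64) ^ f"
    by (simp add: real_sqrt_mult[symmetric] power_mult_distrib[symmetric])
  also have "sqrt (63 / 64) ^ f = (63 / 64) powr (real f / 2)" by (rule sqrt_pow_eq_powr) simp
  also have "\<dots> \<le> (63 / 64) powr ((real f - 99) / 32)" by (rule powr_mono') simp_all
  finally show ?thesis by (simp add: mult_left_mono)
qed

lemma card_kunz_vectors_div_ge_4:
  assumes m: "0 < m" and q: "4 \<le> f div m" and s: "0 < f mod m"
  shows "real (card (kunz_vectors f m)) \<le> real (f + 1) * sqrt 2 ^ f * (63 / 64) powr ((real f - 99) / 32)"
proof -
  define q where "q = f div m"
  define H1 where "H1 = f mod m div 2"
  define H2 where "H2 = (m - f mod m) div 2"
  let ?K = "kunz_vectors f m" and ?c = "63 / 32 :: real"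
  have sm: "f mod m < m" using m by simp
  have "card ?K \<le> ((q + 1)\<^sup>2 - 1) ^ H1 * (q + 1) * (q\<^sup>2 - 1) ^ H2"
  proof -
    have "card ?K \<le> card ((\<lambda>v. restrict v {0<..<f mod m}) ` ?K) * (q + 1)
        * card ((\<lambda>v. restrict v {f mod m<..<m}) ` ?K)"
      using card_kunz_vectors_le_split[OF m s] unfolding q_def .
    also have "\<dots> \<le> ((q + 1)\<^sup>2 - 1) ^ H1 * (q + 1) * (q\<^sup>2 - 1) ^ H2"
      using card_restrict_kunz_vectors_low[OF m] card_restrict_kunz_vectors_high[OF m] q
      unfolding q_def H1_def H2_def by (intro mult_le_mono order_refl) simp_all
    finally show ?thesis .
  qed
  then have "real (card ?K) \<le> real (((q + 1)\<^sup>2 - 1) ^ H1 * (q + 1) * (q\<^sup>2 - 1) ^ H2)"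
    by (simp only: of_nat_le_iff)
  also have "\<dots> = real ((q + 1)\<^sup>2 - 1) ^ H1 * real (q + 1) * real (q\<^sup>2 - 1) ^ H2"
    by (simp only: of_nat_mult of_nat_power)
  also have "\<dots> \<le> (?c ^ (q + 1)) ^ H1 * real (q + 1) * (?c ^ q) ^ H2"
    using square_minus_one_le_pow[of "q + 1"] square_minus_one_le_pow[of q] q unfolding q_def
    by (intro mult_mono power_mono) simp_all
  also have "\<dots> = real (q + 1) * ?c ^ ((q + 1) * H1 + q * H2)"
  proof -
    have "(?c ^ (q + 1)) ^ H1 = ?c ^ ((q + 1) * H1)" "(?c ^ q) ^ H2 = ?c ^ (q * H2)"
      by (simp_all only: power_mult)
    then show ?thesis by (simp only: power_add mult_ac)
  qed
  also have "\<dots> \<le> real (f + 1) * (sqrt 2 ^ f * (63 / 64) powr ((real f - 99) / 32))"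
  proof (rule mult_mono)
    have "(q + 1) * (2 * H1) \<le> (q + 1) * (f mod m)" "q * (2 * H2) \<le> q * (m - f mod m)"
      unfolding H1_def H2_def by (intro mult_le_mono2; simp)+
    moreover have "q * (m - f mod m) + q * (f mod m) = q * m" using sm by (simp flip: distrib_left)
    moreover have "q * m + f mod m = f" using mult_div_mod_eq[of m f] unfolding q_def by (simp add: mult.commute)
    ultimately have "2 * ((q + 1) * H1 + q * H2) \<le> f" by (simp add: algebra_simps)
    then show "?c ^ ((q + 1) * H1 + q * H2) \<le> sqrt 2 ^ f * (63 / 64) powr ((real f - 99) / 32)"
      by (rule pow_63_32_le_sqrt_two_pow)
    show "real (q + 1) \<le> real (f + 1)" unfolding q_def by simp
  qed simp_all
  finally show ?thesis by (simp only: mult.assoc)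
qed

lemma card_kunz_vectors_le:
  assumes m: "2 \<le> m" and mf: "3 * m \<le> f + 1" and s: "0 < f mod m"
  shows "real (card (kunz_vectors f m)) \<le> 4 * real (f + 1) * sqrt 2 ^ f * (63 / 64) powr ((real f - 99) / 32)"
proof -
  let ?B = "\<lambda>c. c * sqrt 2 ^ f * (63 / 64 :: real) powr ((real f - 99) / 32)"
  have m0: "0 < m" using m by simp
  have "2 * m \<le> f" using m mf by linarith
  then have "2 \<le> f div m" using m by (simp add: less_eq_div_iff_mult_less_eq mult.commute)
  then consider "4 \<le> f div m" | "f div m = 3" | "f div m = 2" by linarith
  then show ?thesis
  proof cases
    case 1
    then have "real (card (kunz_vectors f m)) \<le> ?B (real (f + 1))"
      using card_kunz_vectors_div_ge_4[OF m0 _ s] by simp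
    also have "\<dots> \<le> ?B (4 * real (f + 1))" by (intro mult_right_mono) simp_all
    finally show ?thesis .
  next
    case 2
    then have "real (card (kunz_vectors f m)) \<le> ?B (4 * real m)"
      using card_kunz_vectors_div_eq_3[OF m0 _ s] by simp
    also have "\<dots> \<le> ?B (4 * real (f + 1))" using mf by (intro mult_right_mono) simp_all
    finally show ?thesis .
  next
    case 3
    then have "f = 2 * m + f mod m" using mult_div_mod_eq[of m f] by (simp add: mult.commute)
    then have "f = 3 * m - 1" using mf mod_less_divisor[OF m0, of f] by linarith
    then have "real (card (kunz_vectors f m)) \<le> ?B (3 * real m)"
      using card_kunz_vectors_div_eq_2[OF m] by simp
    also have "\<dots> \<le> ?B (4 * real (f + 1))" using mf by (intro mult_right_mono) simp_all
    finally show ?thesis .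
  qed
qed

lemma Fr_mult_small_bound:
  assumes m: "0 < m" and mf: "3 * m \<le> f + 1"
  shows "real (Fr_mult f m) \<le> 4 * real (f + 1) * sqrt 2 ^ f * (63 / 64) powr ((real f - 99) / 32)"
proof (cases "m dvd f")
  case True
  then show ?thesis by (simp add: Fr_mult_eq_0_if_dvd)
next
  case False
  have "real (Fr_mult f m) \<le> real (card (kunz_vectors f m))" using Fr_mult_le_card_kunz_vectors by simp
  also have "\<dots> \<le> 4 * real (f + 1) * sqrt 2 ^ f * (63 / 64) powr ((real f - 99) / 32)"
  proof (rule card_kunz_vectors_le[OF _ mf])
    show "2 \<le> m" using False m by (cases "m = 1") auto
    show "0 < f mod m" using False by (simp add: dvd_eq_mod_eq_0)
  qed
  finally show ?thesis .
qed


section \<open>Backelin's limit\<close>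

definition S_scaled :: "nat \<Rightarrow> real" where
  "S_scaled d = 2 powr (- (3 * real d + 2) / 2) * real (S d)"

lemma two_powr_half: "2 powr (real f / 2) = sqrt 2 ^ f"
  using sqrt_pow_eq_powr[of 2 f] by simp

lemma S_scaled_nonneg: "0 \<le> S_scaled d"
  unfolding S_scaled_def by simp

lemma S_scaled_eq: "S_scaled d = real (S d) / sqrt 2 ^ (3 * d + 2)"
proof -
  have "2 powr (- (3 * real d + 2) / 2) * sqrt 2 ^ (3 * d + 2) = 1"
    unfolding two_powr_half[symmetric] by (simp add: powr_add[symmetric] add_divide_distrib[symmetric])
  then show ?thesis unfolding S_scaled_def by (simp add: field_simps)
qed

lemma S_scaled_le: "S_scaled d \<le> 4 * (3 * real d + 3) * (63 / 64) powr ((3 * real d - 97) / 32)"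
proof -
  have "real (S d)
      \<le> 4 * real (3 * d + 2 + 1) * sqrt 2 ^ (3 * d + 2) * (63 / 64) powr ((real (3 * d + 2) - 99) / 32)"
    unfolding S_eq_Fr_mult by (rule Fr_mult_small_bound) simp_all
  also have "\<dots> = 4 * (3 * real d + 3) * (63 / 64) powr ((3 * real d - 97) / 32) * sqrt 2 ^ (3 * d + 2)"
    by (simp add: algebra_simps)
  finally show ?thesis unfolding S_scaled_eq by (simp add: pos_divide_le_eq)
qed

lemma summable_S_scaled: "summable (\<lambda>j. S_scaled (2 * j + c))"
proof (rule summable_comparison_test_ev)
  let ?r = "(63 / 64 :: real) powr (3 / 32)"
  show "summable (\<lambda>j. ?r ^ j)"
    by (rule summable_geometric) (use powr_less_mono2[of "3 / 32" "63 / 64" 1] in simp)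
  have "(\<lambda>j. 4 * (6 * real j + 3 * real c + 3) * (63 / 64) powr ((3 * real j + 3 * real c - 97) / 32)) \<longlonglongrightarrow> 0"
    by real_asymp
  then have "\<forall>\<^sub>F j in sequentially.
      4 * (6 * real j + 3 * real c + 3) * (63 / 64) powr ((3 * real j + 3 * real c - 97) / 32) < 1"
    by (rule order_tendstoD(2)) simp
  then have "\<forall>\<^sub>F j in sequentially.
      4 * (6 * real j + 3 * real c + 3) * (63 / 64) powr ((3 * real j + 3 * real c - 97) / 32) \<le> 1"
    by (rule eventually_mono) simp
  then show "\<forall>\<^sub>F j in sequentially. norm (S_scaled (2 * j + c)) \<le> ?r ^ j"
  proof eventually_elim
    case (elim j)
    have "norm (S_scaled (2 * j + c))
        \<le> 4 * (6 * real j + 3 * real c + 3) * (63 / 64) powr ((6 * real j + 3 * real c - 97) / 32)"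
      using S_scaled_le[of "2 * j + c"] S_scaled_nonneg by (simp add: algebra_simps)
    also have "\<dots> = (4 * (6 * real j + 3 * real c + 3) * (63 / 64) powr ((3 * real j + 3 * real c - 97) / 32)) * ?r ^ j"
      by (simp add: powr_realpow[symmetric] powr_powr powr_add[symmetric] add_divide_distrib
          diff_divide_distrib add_diff_eq mult_ac)
    also have "\<dots> \<le> ?r ^ j" using elim by (intro mult_left_le_one_le) simp_all
    finally show ?case .
  qed
qed


definition Fr_small :: "nat \<Rightarrow> nat" where
  "Fr_small f = (\<Sum>m | 0 < m \<and> 3 * m \<le> f. Fr_mult f m)"

lemma Fr_small_scaled_tendsto_0: "(\<lambda>f. real (Fr_small f) / 2 powr (real f / 2)) \<longlonglongrightarrow> 0"
proof (rule tendsto_sandwich[of "\<lambda>_. 0" _ _ "\<lambda>f. 4 * (real f + 1) ^ 2 * (63 / 64) powr ((real f - 99) / 32)"])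
  show "\<forall>\<^sub>F f in sequentially. real (Fr_small f) / 2 powr (real f / 2)
      \<le> 4 * (real f + 1) ^ 2 * (63 / 64) powr ((real f - 99) / 32)"
  proof (rule always_eventually, rule allI)
    fix f :: nat
    let ?A = "{m. 0 < m \<and> 3 * m \<le> f}"
    have "card ?A \<le> card {..f}" by (rule card_mono) auto
    then have card_A: "real (card ?A) \<le> real f + 1" by simp
    have "real (Fr_small f) = (\<Sum>m\<in>?A. real (Fr_mult f m))" unfolding Fr_small_def by simp
    also have "\<dots> \<le> real (card ?A) * (4 * real (f + 1) * sqrt 2 ^ f * (63 / 64) powr ((real f - 99) / 32))"
      by (rule sum_bounded_above, rule Fr_mult_small_bound) auto
    also have "\<dots> \<le> (real f + 1) * (4 * real (f + 1) * sqrt 2 ^ f * (63 / 64) powr ((real f - 99) / 32))"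
      using card_A by (rule mult_right_mono) simp
    also have "\<dots> = 4 * (real f + 1) ^ 2 * (63 / 64) powr ((real f - 99) / 32) * sqrt 2 ^ f"
      by (simp add: power2_eq_square algebra_simps)
    finally show "real (Fr_small f) / 2 powr (real f / 2) \<le> 4 * (real f + 1) ^ 2 * (63 / 64) powr ((real f - 99) / 32)"
      by (simp add: two_powr_half pos_divide_le_eq)
  qed
  show "(\<lambda>f. 4 * (real f + 1) ^ 2 * (63 / 64) powr ((real f - 99) / 32)) \<longlonglongrightarrow> 0" by real_asymp
qed simp_all

lemma Fr_decomposition:
  assumes "0 < f"
  shows "Fr f = Fr_small f + (\<Sum>m | f < 3 * m \<and> 2 * m \<le> f. Fr_mult f m) + 2 ^ ((f - 1) div 2)"
proof -
  let ?A = "{m. 0 < m \<and> 3 * m \<le> f}" and ?B = "{m. f < 3 * m \<and> 2 * m \<le> f}" and ?C = "{f div 2<..Suc f}"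
  have fin: "finite ?A" "finite ?B"
    by (rule finite_subset[of _ "{..f}"]; auto)+
  have "{1..Suc f} = ?A \<union> ?B \<union> ?C" by auto
  then have "Fr f = (\<Sum>m\<in>?A \<union> ?B \<union> ?C. Fr_mult f m)" by (simp only: Fr_eq_sum_Fr_mult)
  also have "\<dots> = Fr_small f + (\<Sum>m\<in>?B. Fr_mult f m) + (\<Sum>m\<in>?C. Fr_mult f m)"
    unfolding Fr_small_def using fin by (subst sum.union_disjoint; auto)+
  also have "(\<Sum>m\<in>?C. Fr_mult f m) = card {L \<in> frob_semigroups f. f div 2 < multiplicity L}"
    using sum_Fr_mult[of ?C f] frob_semigroup.multiplicity_le unfolding frob_semigroup_def
    by (simp add: Suc_le_eq) (metis (lifting) greaterThanAtMost_iff le_SucI)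
  also have "\<dots> = 2 ^ ((f - 1) div 2)" using assms by (subst card_multiplicity_gt) auto
  finally show ?thesis .
qed


lemma two_powr_diff_eq_pow:
  assumes "b \<le> a"
  shows "2 powr (real a - real b) = (2::real) ^ (a - b)"
proof -
  have "2 powr real (a - b) = (2::real) ^ (a - b)" by (rule powr_realpow) simp
  then show ?thesis using assms by (simp only: of_nat_diff)
qed

lemma Fr_mult_middle_scaled:
  assumes "f < 3 * m" "2 * m \<le> f"
  shows "real (Fr_mult f m) / 2 powr (real f / 2) = S_scaled (f - 2 * m)"
proof -
  define d where "d = f - 2 * m"
  have f: "f = 2 * m + d" and d: "d < m" using assms unfolding d_def by auto
  have "real (Fr_mult f m) = real (S d) * 2 powr (real m - real (Suc d))"
    unfolding f Fr_mult_middle[OF d] using two_powr_diff_eq_pow[of "Suc d" m] d by simp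
  also have "real m - real (Suc d) = - (3 * real d + 2) / 2 + real f / 2" unfolding f by (simp add: field_simps)
  finally show ?thesis unfolding d_def[symmetric] S_scaled_def by (simp add: powr_add)
qed

definition diff_weight :: "int \<Rightarrow> real" where
  "diff_weight d = (if d < 0 then 2 powr (real_of_int d / 2 - 1) else S_scaled (nat d))"

lemma Fr_mult_scaled:
  assumes "f < 3 * m" "m < f"
  shows "real (Fr_mult f m) / 2 powr (real f / 2) = diff_weight (int f - 2 * int m)"
proof (cases "2 * m \<le> f")
  case True
  then have "int f - 2 * int m = int (f - 2 * m)" by linarith
  moreover have "\<not> int (f - 2 * m) < 0" by simp
  ultimately show ?thesis
    using Fr_mult_middle_scaled[OF assms(1) True] unfolding diff_weight_def by (simp only: if_False nat_int)
next
  case False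
  then have "real (Fr_mult f m) = 2 powr (real f - real (Suc m))"
    using Fr_mult_above_half[of f m] two_powr_diff_eq_pow[of "Suc m" f] assms(2) by simp
  also have "real f - real (Suc m) = ((real f - 2 * real m) / 2 - 1) + real f / 2"
    by (simp add: field_simps)
  finally show ?thesis using False unfolding diff_weight_def by (simp add: powr_add)
qed

lemma sum_middle_reindex:
  fixes n c :: nat and g :: "nat \<Rightarrow> 'a::comm_monoid_add"
  assumes "c \<le> 1"
  shows "(\<Sum>m | 2 * n + c < 3 * m \<and> 2 * m \<le> 2 * n + c. g (2 * n + c - 2 * m))
    = (\<Sum>j<(n + 2 - c) div 3. g (2 * j + c))"
proof (rule sum.reindex_bij_witness[where i = "\<lambda>j. n - j" and j = "\<lambda>m. n - m"])
  have lt_iff: "j < (n + 2 - c) div 3 \<longleftrightarrow> 3 * j + c < n" for j :: nat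
    using assms less_eq_div_iff_mult_less_eq[of 3 "Suc j" "n + 2 - c"] by auto
  show "n - (n - m) = m" "n - m \<in> {..<(n + 2 - c) div 3}" "g (2 * (n - m) + c) = g (2 * n + c - 2 * m)"
    if "m \<in> {m. 2 * n + c < 3 * m \<and> 2 * m \<le> 2 * n + c}" for m
  proof -
    have "m \<le> n" using that assms by auto
    then have "2 * (n - m) + c = 2 * n + c - 2 * m" by simp
    then show "n - (n - m) = m" "n - m \<in> {..<(n + 2 - c) div 3}" "g (2 * (n - m) + c) = g (2 * n + c - 2 * m)"
      using that lt_iff[of "n - m"] \<open>m \<le> n\<close> by auto
  qed
  show "n - (n - j) = j" "n - j \<in> {m. 2 * n + c < 3 * m \<and> 2 * m \<le> 2 * n + c}"
    if "j \<in> {..<(n + 2 - c) div 3}" for j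
    using that lt_iff[of j] by auto
qed


definition Backelin_constant :: "nat \<Rightarrow> real" where
  "Backelin_constant c = 2 powr (real c / 2 - 1) + (\<Sum>j. S_scaled (2 * j + c))"

lemma Backelin_constant_pos: "0 < Backelin_constant c"
  unfolding Backelin_constant_def
  using suminf_nonneg[OF summable_S_scaled S_scaled_nonneg, of c] by (simp add: add_pos_nonneg)

lemma Fr_scaled_eq:
  assumes "c \<le> 1" "0 < n"
  shows "real (Fr (2 * n + c)) / 2 powr (real (2 * n + c) / 2)
    = 2 powr (real c / 2 - 1) + (\<Sum>j<(n + 2 - c) div 3. S_scaled (2 * j + c))
      + real (Fr_small (2 * n + c)) / 2 powr (real (2 * n + c) / 2)"
proof -
  let ?f = "2 * n + c" let ?P = "2 powr (real ?f / 2)"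
  have "real (Fr ?f) / ?P = real (2 ^ ((?f - 1) div 2)) / ?P
      + (\<Sum>m | ?f < 3 * m \<and> 2 * m \<le> ?f. real (Fr_mult ?f m) / ?P) + real (Fr_small ?f) / ?P"
    using Fr_decomposition[of ?f] assms(2) by (simp add: add_divide_distrib sum_divide_distrib)
  also have "real (2 ^ ((?f - 1) div 2)) / ?P = 2 powr (real c / 2 - 1)"
  proof -
    have "(?f - 1) div 2 = n - 1 + c" using assms by auto
    then have "real (2 ^ ((?f - 1) div 2)) = 2 powr (real n - 1 + real c)"
      using two_powr_diff_eq_pow[of 1 "n + c"] assms by (simp add: algebra_simps)
    then show ?thesis by (simp add: powr_diff[symmetric] field_simps)
  qed
  also have "(\<Sum>m | ?f < 3 * m \<and> 2 * m \<le> ?f. real (Fr_mult ?f m) / ?P)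
      = (\<Sum>m | ?f < 3 * m \<and> 2 * m \<le> ?f. S_scaled (?f - 2 * m))"
    by (rule sum.cong[OF refl], rule Fr_mult_middle_scaled) auto
  also have "\<dots> = (\<Sum>j<(n + 2 - c) div 3. S_scaled (2 * j + c))"
    by (rule sum_middle_reindex[OF assms(1)])
  finally show ?thesis .
qed

lemma Fr_scaled_tendsto:
  assumes "c \<le> 1"
  shows "(\<lambda>n. real (Fr (2 * n + c)) / 2 powr (real (2 * n + c) / 2)) \<longlonglongrightarrow> Backelin_constant c"
proof -
  have "filterlim (\<lambda>n. (n + 2 - c) div 3) at_top sequentially"
    unfolding filterlim_at_top eventually_sequentially
  proof
    fix Z :: nat
    show "\<exists>N. \<forall>n\<ge>N. Z \<le> (n + 2 - c) div 3"
      using assms by (intro exI[of _ "3 * Z"]) (auto simp: less_eq_div_iff_mult_less_eq)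
  qed
  then have partial: "(\<lambda>n. \<Sum>j<(n + 2 - c) div 3. S_scaled (2 * j + c)) \<longlonglongrightarrow> (\<Sum>j. S_scaled (2 * j + c))"
    using summable_LIMSEQ[OF summable_S_scaled] by (rule filterlim_compose[rotated])
  have "strict_mono (\<lambda>n. 2 * n + c)" by (rule strict_monoI) simp
  then have small: "(\<lambda>n. real (Fr_small (2 * n + c)) / 2 powr (real (2 * n + c) / 2)) \<longlonglongrightarrow> 0"
    using LIMSEQ_subseq_LIMSEQ[OF Fr_small_scaled_tendsto_0] by (simp only: comp_def)
  have "(\<lambda>n. 2 powr (real c / 2 - 1) + (\<Sum>j<(n + 2 - c) div 3. S_scaled (2 * j + c))
      + real (Fr_small (2 * n + c)) / 2 powr (real (2 * n + c) / 2)) \<longlonglongrightarrow> Backelin_constant c + 0"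
    unfolding Backelin_constant_def by (intro tendsto_add tendsto_const partial small)
  moreover have "\<forall>\<^sub>F n in sequentially. 2 powr (real c / 2 - 1) + (\<Sum>j<(n + 2 - c) div 3. S_scaled (2 * j + c))
      + real (Fr_small (2 * n + c)) / 2 powr (real (2 * n + c) / 2)
      = real (Fr (2 * n + c)) / 2 powr (real (2 * n + c) / 2)"
    using eventually_gt_at_top[of 0] by eventually_elim (metis Fr_scaled_eq[OF assms])
  ultimately show ?thesis by (simp add: Lim_transform_eventually)
qed


section \<open>The distribution of \<open>f - 2 m\<close>\<close>

lemma prob_diff_eq:
  assumes "int f - d = 2 * int m"
  shows "prob_diff f d = real (Fr_mult f m) / real (Fr f)"
proof -
  have "{L. numerical_semigroup L \<and> frobenius L = int f \<and> int f - 2 * int (multiplicity L) = d}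
      = {L \<in> frob_semigroups f. multiplicity L = m}"
    using frob_semigroups_eq[of f] assms by auto
  then show ?thesis unfolding prob_diff_def Fr_mult_def by simp
qed

lemma prob_diff_tendsto:
  assumes "c \<le> 1"
  shows "(\<lambda>n. prob_diff (2 * n + c) (2 * k + int c)) \<longlonglongrightarrow> diff_weight (2 * k + int c) / Backelin_constant c"
proof -
  let ?F = "\<lambda>n. real (Fr (2 * n + c)) / 2 powr (real (2 * n + c) / 2)"
  have "(\<lambda>n. diff_weight (2 * k + int c) / ?F n) \<longlonglongrightarrow> diff_weight (2 * k + int c) / Backelin_constant c"
    using Backelin_constant_pos[of c] by (intro tendsto_divide tendsto_const Fr_scaled_tendsto assms) simp
  moreover have "\<forall>\<^sub>F n in sequentially. diff_weight (2 * k + int c) / ?F n = prob_diff (2 * n + c) (2 * k + int c)"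
  proof (rule eventually_sequentiallyI[of "nat (3 * \<bar>k\<bar>) + 2"])
    fix n assume n: "nat (3 * \<bar>k\<bar>) + 2 \<le> n"
    define m where "m = nat (int n - k)"
    have m: "int m = int n - k" using n unfolding m_def by simp
    have f: "2 * n + c < 3 * m" "m < 2 * n + c" and d: "int (2 * n + c) - 2 * int m = 2 * k + int c"
      using n m assms by linarith+
    have "real (Fr_mult (2 * n + c) m) / 2 powr (real (2 * n + c) / 2) = diff_weight (int (2 * n + c) - 2 * int m)"
      using f by (rule Fr_mult_scaled)
    then have "real (Fr_mult (2 * n + c) m) / 2 powr (real (2 * n + c) / 2) = diff_weight (2 * k + int c)"
      unfolding d .
    moreover have "prob_diff (2 * n + c) (2 * k + int c) = real (Fr_mult (2 * n + c) m) / real (Fr (2 * n + c))"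
      by (rule prob_diff_eq) (use d in simp)
    ultimately show "diff_weight (2 * k + int c) / ?F n = prob_diff (2 * n + c) (2 * k + int c)"
      by (cases "Fr (2 * n + c) = 0") (simp_all add: field_simps)
  qed
  ultimately show ?thesis by (rule Lim_transform_eventually)
qed

lemma C0_eq: "C0 = Backelin_constant 0"
  unfolding C0_def by (rule limI) (use Fr_scaled_tendsto[of 0] in simp)

lemma C1_eq: "C1 = Backelin_constant 1"
  unfolding C1_def by (rule limI) (use Fr_scaled_tendsto[of 1] in simp)

lemma diff_weight_even:
  "diff_weight (2 * k) = (if k < 0 then 2 powr (real_of_int k - 1) else if k = 0 then 0
     else 2 powr (- 3 * real_of_int k - 1) * real (S (nat (2 * k))))"
proof (cases "0 < k")
  case True
  then have e: "- (3 * real (nat (2 * k)) + 2) / 2 = - 3 * real_of_int k - 1" by (simp add: field_simps)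
  show ?thesis using True unfolding diff_weight_def S_scaled_def e by simp
qed (auto simp: diff_weight_def S_scaled_def S_0)

lemma diff_weight_odd:
  "diff_weight (2 * k + 1) = (if k < 0 then 2 powr ((2 * real_of_int k - 1) / 2)
     else 2 powr (- (6 * real_of_int k + 5) / 2) * real (S (nat (2 * k + 1))))"
proof (cases "0 \<le> k")
  case True
  then have e: "- (3 * real (nat (2 * k + 1)) + 2) / 2 = - (6 * real_of_int k + 5) / 2"
    by (simp add: field_simps)
  show ?thesis using True unfolding diff_weight_def S_scaled_def e by simp
next
  case False
  then show ?thesis unfolding diff_weight_def by (simp add: field_simps)
qed

theorem theorem5p1:
  fixes k :: int
  shows "((\<lambda>n. prob_diff (2 * n) (2 * k)) \<longlonglongrightarrow>
           (if k < 0 then 2 powr (real_of_int k - 1) / C0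
            else if k = 0 then 0
            else 2 powr (- 3 * real_of_int k - 1) * real (S (nat (2 * k))) / C0)) \<and>
         ((\<lambda>n. prob_diff (2 * n + 1) (2 * k + 1)) \<longlonglongrightarrow>
           (if k < 0 then 2 powr ((2 * real_of_int k - 1) / 2) / C1
            else 2 powr (- (6 * real_of_int k + 5) / 2) * real (S (nat (2 * k + 1))) / C1))"
proof
  have "(\<lambda>n. prob_diff (2 * n) (2 * k)) \<longlonglongrightarrow> diff_weight (2 * k) / C0"
    using prob_diff_tendsto[of 0 k] unfolding C0_eq by simp
  then show "(\<lambda>n. prob_diff (2 * n) (2 * k)) \<longlonglongrightarrow>
      (if k < 0 then 2 powr (real_of_int k - 1) / C0 else if k = 0 then 0
       else 2 powr (- 3 * real_of_int k - 1) * real (S (nat (2 * k))) / C0)"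
    unfolding diff_weight_even by (simp split: if_splits)
  have "(\<lambda>n. prob_diff (2 * n + 1) (2 * k + 1)) \<longlonglongrightarrow> diff_weight (2 * k + 1) / C1"
    using prob_diff_tendsto[of 1 k] unfolding C1_eq by simp
  then show "(\<lambda>n. prob_diff (2 * n + 1) (2 * k + 1)) \<longlonglongrightarrow>
      (if k < 0 then 2 powr ((2 * real_of_int k - 1) / 2) / C1
       else 2 powr (- (6 * real_of_int k + 5) / 2) * real (S (nat (2 * k + 1))) / C1)"
    unfolding diff_weight_odd by (simp split: if_splits)
qed

end
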